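(* Let $n\ge1$, let $F(x,y_0,\ldots,y_n)\not\equiv0$ be holomorphic in a neighbourhood of $0\in\mathbb{C}^{n+2}$ with $F(0)=0$, and let $\varphi=\sum_{k=1}^{\infty}c_k(t)x^{\lambda_k}$ ($t=\ln x$, $c_k\in\mathbb{C}[t]$, $c_1\not\equiv0$, $\lambda_k\in\mathbb{C}$, $0<\mathrm{Re}\,\lambda_1\le\mathrm{Re}\,\lambda_2\le\ldots\to\infty$) be a Dulac series which is a formal solution of $F(x,y,\delta y,\ldots,\delta^ny)=0$, $\delta=x\,d/dx$. Assume $F'_{y_n}(x,\varphi,\ldots,\delta^n\varphi)\not\equiv0$ and that for each $j=0,\ldots,n$, $$F'_{y_j}(x,\varphi,\ldots,\delta^n\varphi)=A_j\,x^{\nu}+B_j(t)\,x^{\nu_j}+\ldots,\qquad A_j\in\mathbb{C},\ B_j\in\mathbb{C}[t]\setminus\{0\},\ \mathrm{Re}\,\nu_j>\mathrm{Re}\,\nu,$$ where the dots denote terms $b(t)x^\sigma$ with $\mathrm{Re}\,\sigma\ge\mathrm{Re}\,\nu_j$, $\nu\in\mathbb{C}$ is common to all $j$, and at least one $A_j\ne0$. Let $\ell=\max\{j\mid A_j\ne0\}$, let $s=+\infty$ if $A_n\ne0$ and $s=\min_{j>\ell}(\mathrm{Re}\,\nu_j-\mathrm{Re}\,\nu)/(j-\ell)$ if $A_n=0$, and let $\tau=(n-\ell)s$ if $\ell<n$ and $\tau=0$ if $\ell=n$. For $m\in\mathbb{N}$ put $\varphi_m=\sum_{k=1}^mc_k(t)x^{\lambda_k}$.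 Then there exists $m\in\mathbb{N}$ such that the substitution $y=\varphi_m+x^{\lambda_m}u$ transforms the equation $F(x,y,\delta y,\ldots,\delta^ny)=0$ (after division by $x^{\lambda_m+\nu}$) into an equation of the form $$L(\lambda_m+\delta)u+\widetilde{L}(t,x,\lambda_m+\delta)u+N\bigl(t,x,x^{\tau}u,x^{\tau}(\lambda_m+\delta)u,\ldots,x^{\tau}(\lambda_m+\delta)^nu\bigr)=0,$$ where: - $L(\zeta)=\sum_{j=0}^{\ell}A_j\zeta^j$, and $L(\lambda_m+z)\ne0$ for all $z\in\mathbb{C}$ with $\mathrm{Re}\,z\ge0$; - $\widetilde{L}(t,x,\zeta)=\sum_{j=0}^{n}\bigl(B_j(t)x^{\mu_j}+\ldots\bigr)\zeta^j\in\mathcal{D}^{\circ}[\zeta]$ with $\mu_j=\nu_j-\nu$ (each coefficient is a convergent Dulac series with leading term $B_j(t)x^{\mu_j}$); - $N(t,x,u_0,\ldots,u_n)=\sum_{\mathbf{q}\in\mathbb{Z}_+^{n+1}}a_{\mathbf{q}}(t,x)u_0^{q_0}\cdots u_n^{q_n}$ with $a_{\mathbf{q}}\in\mathcal{D}^{\circ}$, is holomorphic in $(u_0,\ldots,u_n)$ in a neighbourhood of $0\in\mathbb{C}^{n+1}$, and contains no terms of degree exactly one in $u_0,\ldots,u_n$.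
   Context: Dulac series, the action of $\delta$ on them ($\delta\sum c_k(t)x^{\lambda_k}=\sum(\lambda_k+d/dt)c_k(t)x^{\lambda_k}$; note $\delta(x^{\lambda_m}u)=x^{\lambda_m}(\lambda_m+\delta)u$), substitution into holomorphic $F$ via Taylor series, and formal solutions are as usual. $\mathcal{D}^{\circ}$ denotes the ring of Dulac series (exponents with positive real parts, real parts tending to infinity, polynomial coefficients in $t=\ln x$) that converge in some open sector with vertex at $0$, of sufficiently small radius and opening less than $2\pi$. *)

theory Defs
  imports "HOL-Analysis.Analysis" "HOL-Computational_Algebra.Polynomial"
begin

text \<open>Formal Dulac series: a map from exponents (complex) to polynomial coefficients in t = ln x.
  D represents the formal sum over l of (D l)(t) x^l.\<close>
type_synonym dulac = "complex \<Rightarrow> complex poly"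

definition dulac :: "dulac \<Rightarrow> bool" where
  "dulac D \<longleftrightarrow> (\<forall>R. finite {l. D l \<noteq> 0 \<and> Re l < R})"

definition dmon :: "complex \<Rightarrow> complex poly \<Rightarrow> dulac" where
  "dmon a p = (\<lambda>l. if l = a then p else 0)"

definition dadd :: "dulac \<Rightarrow> dulac \<Rightarrow> dulac" where
  "dadd D E = (\<lambda>l. D l + E l)"

definition dmul :: "dulac \<Rightarrow> dulac \<Rightarrow> dulac" where
  "dmul D E = (\<lambda>s. \<Sum>a | D a \<noteq> 0 \<and> E (s - a) \<noteq> 0. D a * E (s - a))"

fun dpow :: "dulac \<Rightarrow> nat \<Rightarrow> dulac" where
  "dpow D 0 = dmon 0 1"
| "dpow D (Suc k) = dmul D (dpow D k)"

fun dprodn :: "nat \<Rightarrow> (nat \<Rightarrow> dulac) \<Rightarrow> dulac" where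
  "dprodn 0 G = dmon 0 1"
| "dprodn (Suc k) G = dmul (dprodn k G) (G k)"

text \<open>delta = x d/dx acting on Dulac series: delta (c(t) x^l) = (l c(t) + c'(t)) x^l.\<close>
definition ddelta :: "dulac \<Rightarrow> dulac" where
  "ddelta D = (\<lambda>l. smult l (D l) + pderiv (D l))"

text \<open>multiplication by x^a\<close>
definition dshift :: "complex \<Rightarrow> dulac \<Rightarrow> dulac" where
  "dshift a D = (\<lambda>s. D (s - a))"

definition MI :: "nat \<Rightarrow> (nat \<Rightarrow> nat) set" where
  "MI k = {\<alpha>. \<forall>i\<ge>k. \<alpha> i = 0}"

definition msize :: "nat \<Rightarrow> (nat \<Rightarrow> nat) \<Rightarrow> nat" where
  "msize k \<alpha> = (\<Sum>i<k. \<alpha> i)"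

text \<open>A holomorphic germ at 0 in k complex variables, given by its Taylor coefficients
  f (alpha) (coefficient of z_0^alpha_0 ... z_(k-1)^alpha_(k-1)), convergent in a polydisc.\<close>
definition conv_ps :: "nat \<Rightarrow> ((nat \<Rightarrow> nat) \<Rightarrow> complex) \<Rightarrow> bool" where
  "conv_ps k f \<longleftrightarrow> (\<forall>\<alpha>. \<alpha> \<notin> MI k \<longrightarrow> f \<alpha> = 0) \<and>
     (\<exists>r>0. (\<lambda>\<alpha>. norm (f \<alpha>) * r ^ msize k \<alpha>) summable_on MI k)"

text \<open>Monomial x^(alpha 0) * Y_0^(alpha 1) * ... * Y_(k-1)^(alpha k)\<close>
definition dterm :: "nat \<Rightarrow> (nat \<Rightarrow> dulac) \<Rightarrow> (nat \<Rightarrow> nat) \<Rightarrow> dulac" where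
  "dterm k Y \<alpha> = dmul (dmon (of_nat (\<alpha> 0)) 1) (dprodn k (\<lambda>j. dpow (Y j) (\<alpha> (Suc j))))"

text \<open>Formal substitution F(x, Y_0, ..., Y_(k-1)) of Dulac series into a power series f
  in k+1 variables (x, y_0, ..., y_(k-1)), via the Taylor series of F.\<close>
definition dsubst :: "nat \<Rightarrow> ((nat \<Rightarrow> nat) \<Rightarrow> complex) \<Rightarrow> (nat \<Rightarrow> dulac) \<Rightarrow> dulac" where
  "dsubst k f Y = (\<lambda>s. \<Sum>\<alpha> | \<alpha> \<in> MI (Suc k) \<and> f \<alpha> \<noteq> 0 \<and> dterm k Y \<alpha> s \<noteq> 0.
                         smult (f \<alpha>) (dterm k Y \<alpha> s))"

text \<open>Taylor coefficients of the partial derivative with respect to y_j\<close>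
definition pdy :: "((nat \<Rightarrow> nat) \<Rightarrow> complex) \<Rightarrow> nat \<Rightarrow> (nat \<Rightarrow> nat) \<Rightarrow> complex" where
  "pdy f j \<alpha> = of_nat (\<alpha> (Suc j) + 1) * f (\<alpha>(Suc j := \<alpha> (Suc j) + 1))"

text \<open>taylorc k f q: coefficient (a power series in x, y) of w^q in F(x, y_0 + w_0, ..., y_(k-1) + w_(k-1))\<close>
definition taylorc :: "nat \<Rightarrow> ((nat \<Rightarrow> nat) \<Rightarrow> complex) \<Rightarrow> (nat \<Rightarrow> nat) \<Rightarrow> (nat \<Rightarrow> nat) \<Rightarrow> complex" where
  "taylorc k f q \<alpha> = of_nat (\<Prod>j<k. (\<alpha> (Suc j) + q j) choose (q j)) *
      f (\<lambda>i. if i = 0 then \<alpha> 0 else \<alpha> i + q (i - 1))"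

definition dphi :: "(nat \<Rightarrow> complex poly) \<Rightarrow> (nat \<Rightarrow> complex) \<Rightarrow> dulac" where
  "dphi c lam = (\<lambda>s. \<Sum>k | 1 \<le> k \<and> lam k = s. c k)"

definition dphim :: "(nat \<Rightarrow> complex poly) \<Rightarrow> (nat \<Rightarrow> complex) \<Rightarrow> nat \<Rightarrow> dulac" where
  "dphim c lam m = (\<lambda>s. \<Sum>k | 1 \<le> k \<and> k \<le> m \<and> lam k = s. c k)"

text \<open>Open sectors with vertex 0, radius r, opening a < 2 pi, direction th, in the
  logarithmic coordinate t = ln x (so x = exp t).\<close>
definition is_sector :: "complex set \<Rightarrow> bool" where
  "is_sector S \<longleftrightarrow> (\<exists>th a r. 0 < a \<and> a < 2 * pi \<and> 0 < r \<and>
      S = {t. Re t < ln r \<and> \<bar>Im t - th\<bar> < a / 2})"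

definition in_Dcirc :: "complex set \<Rightarrow> dulac \<Rightarrow> bool" where
  "in_Dcirc S D \<longleftrightarrow> dulac D \<and> (\<forall>l. D l \<noteq> 0 \<longrightarrow> 0 < Re l) \<and>
     (\<forall>t\<in>S. (\<lambda>l. poly (D l) t * exp (l * t)) summable_on UNIV)"

definition deval :: "dulac \<Rightarrow> complex \<Rightarrow> complex" where
  "deval D t = (\<Sum>\<^sub>\<infinity>l. poly (D l) t * exp (l * t))"

definition ell :: "nat \<Rightarrow> (nat \<Rightarrow> complex) \<Rightarrow> nat" where
  "ell n A = Max {j. j \<le> n \<and> A j \<noteq> 0}"

text \<open>tau = (n - ell) * s; when ell = n (i.e. A_n \<noteq> 0, s = +infinity) tau = 0.\<close>
definition tau :: "nat \<Rightarrow> (nat \<Rightarrow> complex) \<Rightarrow> complex \<Rightarrow> (nat \<Rightarrow> complex) \<Rightarrow> real" where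
  "tau n A nu nuj = (if ell n A = n then 0 else
     real (n - ell n A) * Min {(Re (nuj j) - Re nu) / real (j - ell n A) | j. ell n A < j \<and> j \<le> n})"

definition unitv :: "nat \<Rightarrow> nat \<Rightarrow> nat" where
  "unitv j = (\<lambda>i. if i = j then 1 else 0)"

end

(*
  Put Y_j = delta^j phi and Y'_j = delta^j phi_m, where m is chosen just before a gap
  Re lam_m < Re lam_(m+1) and beyond all the bounds needed.  Every Dulac series involved has
  exponents of nonnegative real part; these form a ring in which orders add up, and in it
  Y_j - Y'_j has order at least Re lam_(m+1).

  A first-order Taylor expansion of F around its formal root Y shows that F(x, Y') has order
  at least Re lam_(m+1) + Re nu: the partial derivatives F'_(y_j)(x, Y') agree with
  F'_(y_j)(x, Y) below order Re lam_(m+1), hence have order at least Re nu.  The coefficient of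
  u^q in F(x, phi_m + x^lam_m u) / x^(lam_m + nu) is the q-th Taylor coefficient of F at Y',
  shifted by lam_m |q| - lam_m - nu.  For |q| = 1 this gives L and L~, for |q| = 0 the defect
  above, and for |q| >= 2 the exponents stay positive after removing x^(tau |q|) as soon as
  Re lam_m > 2 (Re nu + tau).

  Convergence is cheap because phi_m is a finite sum: on a thin sector near x = 0 every Y'_j is
  small, and Cauchy estimates for the Taylor coefficients of F bound the coefficients of N
  geometrically in |q|.
*)

theory Submission
  imports Defs
begin

section \<open>Dulac series with nonnegative exponents\<close>

definition exps_ge :: "real \<Rightarrow> dulac \<Rightarrow> bool" where
  "exps_ge c D \<longleftrightarrow> (\<forall>l. D l \<noteq> 0 \<longrightarrow> c \<le> Re l)"

definition nonneg_dulac :: "dulac \<Rightarrow> bool" where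
  "nonneg_dulac D \<longleftrightarrow> dulac D \<and> exps_ge 0 D"

lemma exps_geD: "exps_ge c D \<Longrightarrow> D l \<noteq> 0 \<Longrightarrow> c \<le> Re l"
  unfolding exps_ge_def by blast

lemma exps_ge_mono: "exps_ge c D \<Longrightarrow> d \<le> c \<Longrightarrow> exps_ge d D"
  unfolding exps_ge_def by force

lemma exps_ge_add: "exps_ge c D \<Longrightarrow> exps_ge c E \<Longrightarrow> exps_ge c (\<lambda>l. D l + E l)"
  unfolding exps_ge_def by (metis add.right_neutral)

lemma exps_ge_uminus: "exps_ge c D \<Longrightarrow> exps_ge c (\<lambda>l. - D l)"
  unfolding exps_ge_def by simp

lemma exps_ge_dmon: "c \<le> Re a \<Longrightarrow> exps_ge c (dmon a p)"
  unfolding exps_ge_def dmon_def by auto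

lemma exps_ge_zero [simp]: "exps_ge c (\<lambda>_. 0)"
  unfolding exps_ge_def by simp

lemma dulac_finite_le: "dulac D \<Longrightarrow> finite {l. D l \<noteq> 0 \<and> Re l \<le> R}"
  unfolding dulac_def by (rule finite_subset[of _ "{l. D l \<noteq> 0 \<and> Re l < R + 1}"]) auto

lemma dulac_add: "dulac D \<Longrightarrow> dulac E \<Longrightarrow> dulac (\<lambda>l. D l + E l)"
  unfolding dulac_def
  by (rule allI, rule_tac B = "{l. D l \<noteq> 0 \<and> Re l < R} \<union> {l. E l \<noteq> 0 \<and> Re l < R}" for R
      in finite_subset) auto

lemma dulac_uminus: "dulac D \<Longrightarrow> dulac (\<lambda>l. - D l)"
  unfolding dulac_def by simp

lemma dulac_diff: "dulac D \<Longrightarrow> dulac E \<Longrightarrow> dulac (\<lambda>l. D l - E l)"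
  using dulac_add[of D "\<lambda>l. - E l"] dulac_uminus[of E] by simp

lemma dulac_dmon: "dulac (dmon a p)"
  unfolding dulac_def dmon_def by (auto intro: finite_subset[of _ "{a}"])

lemma dulac_dshift: "dulac D \<Longrightarrow> dulac (dshift a D)"
  unfolding dulac_def dshift_def
proof
  fix R assume "\<forall>R. finite {l. D l \<noteq> 0 \<and> Re l < R}"
  then have "finite ((\<lambda>l. l + a) ` {l. D l \<noteq> 0 \<and> Re l < R - Re a})" by auto
  moreover have "{l. D (l - a) \<noteq> 0 \<and> Re l < R} \<subseteq> (\<lambda>l. l + a) ` {l. D l \<noteq> 0 \<and> Re l < R - Re a}"
    by (auto intro!: image_eqI[of _ _ "_ - a"])
  ultimately show "finite {l. D (l - a) \<noteq> 0 \<and> Re l < R}" by (rule finite_subset[rotated])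
qed

lemma nonneg_dulac_add: "nonneg_dulac D \<Longrightarrow> nonneg_dulac E \<Longrightarrow> nonneg_dulac (\<lambda>l. D l + E l)"
  unfolding nonneg_dulac_def by (simp add: dulac_add exps_ge_add)

lemma nonneg_dulac_uminus: "nonneg_dulac D \<Longrightarrow> nonneg_dulac (\<lambda>l. - D l)"
  unfolding nonneg_dulac_def by (simp add: dulac_uminus exps_ge_uminus)

lemma nonneg_dulac_zero: "nonneg_dulac (\<lambda>_. 0)"
  unfolding nonneg_dulac_def dulac_def by simp

lemma nonneg_dulac_dmon: "0 \<le> Re a \<Longrightarrow> nonneg_dulac (dmon a p)"
  unfolding nonneg_dulac_def by (simp add: dulac_dmon exps_ge_dmon)

lemma dmul_eq_sum_superset:
  assumes "finite T" "{a. D a \<noteq> 0 \<and> E (s - a) \<noteq> 0} \<subseteq> T"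
  shows "dmul D E s = (\<Sum>a\<in>T. D a * E (s - a))"
  unfolding dmul_def by (rule sum.mono_neutral_left) (use assms in auto)

lemma dmul_support_subset:
  "exps_ge 0 E \<Longrightarrow> {a. D a \<noteq> 0 \<and> E (s - a) \<noteq> 0} \<subseteq> {a. D a \<noteq> 0 \<and> Re a \<le> Re s}"
  unfolding exps_ge_def by force

lemma dmul_neq_zeroE:
  assumes "dmul D E s \<noteq> 0"
  obtains a where "D a \<noteq> 0" "E (s - a) \<noteq> 0"
  using assms unfolding dmul_def by (auto elim: sum.not_neutral_contains_not_neutral)

lemma dmul_commute: "dmul D E = dmul E D"
proof
  fix s
  show "dmul D E s = dmul E D s"
    unfolding dmul_def
    by (rule sum.reindex_bij_witness[of _ "\<lambda>b. s - b" "\<lambda>a. s - a"]) (auto simp: mult.commute)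
qed

lemma exps_ge_dmul: "exps_ge c D \<Longrightarrow> exps_ge d E \<Longrightarrow> exps_ge (c + d) (dmul D E)"
  unfolding exps_ge_def by (force elim: dmul_neq_zeroE)

lemma dulac_dmul:
  assumes "nonneg_dulac D" "nonneg_dulac E"
  shows "dulac (dmul D E)"
  unfolding dulac_def
proof
  fix R
  have "{s. dmul D E s \<noteq> 0 \<and> Re s < R} \<subseteq>
        (\<lambda>(a, b). a + b) ` ({a. D a \<noteq> 0 \<and> Re a < R} \<times> {b. E b \<noteq> 0 \<and> Re b < R})"
  proof
    fix s assume s: "s \<in> {s. dmul D E s \<noteq> 0 \<and> Re s < R}"
    then obtain a where a: "D a \<noteq> 0" "E (s - a) \<noteq> 0"
      by (auto elim: dmul_neq_zeroE)
    with assms have "0 \<le> Re a" "0 \<le> Re (s - a)"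
      unfolding nonneg_dulac_def by (auto dest: exps_geD)
    with a s show "s \<in> (\<lambda>(a, b). a + b) ` ({a. D a \<noteq> 0 \<and> Re a < R} \<times> {b. E b \<noteq> 0 \<and> Re b < R})"
      by (intro image_eqI[of _ _ "(a, s - a)"]) auto
  qed
  moreover have "finite ({a. D a \<noteq> 0 \<and> Re a < R} \<times> {b. E b \<noteq> 0 \<and> Re b < R})"
    using assms unfolding nonneg_dulac_def dulac_def by auto
  ultimately show "finite {s. dmul D E s \<noteq> 0 \<and> Re s < R}"
    by (meson finite_imageI finite_subset)
qed

lemma nonneg_dulac_dmul: "nonneg_dulac D \<Longrightarrow> nonneg_dulac E \<Longrightarrow> nonneg_dulac (dmul D E)"
  using dulac_dmul exps_ge_dmul[of 0 D 0 E] unfolding nonneg_dulac_def by simp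

lemma dmul_eq_double_sum:
  assumes "exps_ge 0 D" "exps_ge 0 E" "finite SA" "finite SB"
    "{a. D a \<noteq> 0 \<and> Re a \<le> Re s} \<subseteq> SA" "{b. E b \<noteq> 0 \<and> Re b \<le> Re s} \<subseteq> SB"
  shows "dmul D E s = (\<Sum>a\<in>SA. \<Sum>b\<in>SB. if a + b = s then D a * E b else 0)"
proof -
  have "dmul D E s = (\<Sum>a\<in>SA. D a * E (s - a))"
    by (rule dmul_eq_sum_superset) (use assms dmul_support_subset[of E D s] in auto)
  also have "\<dots> = (\<Sum>a\<in>SA. \<Sum>b\<in>SB. if a + b = s then D a * E b else 0)"
  proof (rule sum.cong[OF refl])
    fix a
    have eq: "(\<Sum>b\<in>SB. if a + b = s then D a * E b else 0)
        = (\<Sum>b\<in>SB. if b = s - a then D a * E b else 0)"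
      by (rule sum.cong) (auto simp: algebra_simps)
    show "D a * E (s - a) = (\<Sum>b\<in>SB. if a + b = s then D a * E b else 0)"
    proof (cases "D a = 0 \<or> E (s - a) = 0")
      case True
      then show ?thesis unfolding eq using assms(4) by (auto simp: sum.delta)
    next
      case False
      then have "s - a \<in> SB"
        using assms(1,6) exps_geD[of 0 D a] by auto
      then show ?thesis unfolding eq using assms(4) by (simp add: sum.delta)
    qed
  qed
  finally show ?thesis .
qed

lemma dmul_support_le_subset:
  assumes D: "exps_ge 0 D" and E: "exps_ge 0 E"
    and sub: "{a. D a \<noteq> 0 \<and> Re a \<le> Re s} \<subseteq> SA" "{b. E b \<noteq> 0 \<and> Re b \<le> Re s} \<subseteq> SB"
  shows "{w. dmul D E w \<noteq> 0 \<and> Re w \<le> Re s} \<subseteq> {w \<in> (\<lambda>(a, b). a + b) ` (SA \<times> SB). Re w \<le> Re s}"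
proof
  fix w assume "w \<in> {w. dmul D E w \<noteq> 0 \<and> Re w \<le> Re s}"
  then have w: "dmul D E w \<noteq> 0" "Re w \<le> Re s" by auto
  then obtain a where a: "D a \<noteq> 0" "E (w - a) \<noteq> 0" by (auto elim: dmul_neq_zeroE)
  have "0 \<le> Re a" "0 \<le> Re (w - a)" using exps_geD[OF D a(1)] exps_geD[OF E a(2)] .
  then have "a \<in> SA" "w - a \<in> SB" using a w sub by auto
  then show "w \<in> {w \<in> (\<lambda>(a, b). a + b) ` (SA \<times> SB). Re w \<le> Re s}"
    using w by (auto intro!: image_eqI[of _ _ "(a, w - a)"])
qed

lemma dmul_dmul_eq_triple_sum:
  assumes D: "nonneg_dulac D" and E: "nonneg_dulac E" and G: "exps_ge 0 G"
    and fin: "finite SA" "finite SB" "finite SC"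
    and sub: "{a. D a \<noteq> 0 \<and> Re a \<le> Re s} \<subseteq> SA" "{b. E b \<noteq> 0 \<and> Re b \<le> Re s} \<subseteq> SB"
      "{c. G c \<noteq> 0 \<and> Re c \<le> Re s} \<subseteq> SC"
    and SA: "\<And>a. a \<in> SA \<Longrightarrow> 0 \<le> Re a" and SB: "\<And>b. b \<in> SB \<Longrightarrow> 0 \<le> Re b"
  shows "dmul (dmul D E) G s
    = (\<Sum>a\<in>SA. \<Sum>b\<in>SB. \<Sum>c\<in>SC. if a + b + c = s then D a * E b * G c else 0)"
proof -
  have D0: "exps_ge 0 D" and E0: "exps_ge 0 E" using D E by (auto simp: nonneg_dulac_def)
  define W where "W = {w \<in> (\<lambda>(a, b). a + b) ` (SA \<times> SB). Re w \<le> Re s}"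
  have finW: "finite W" unfolding W_def using fin by auto
  have subW: "{w. dmul D E w \<noteq> 0 \<and> Re w \<le> Re s} \<subseteq> W"
    unfolding W_def by (rule dmul_support_le_subset[OF D0 E0 sub(1,2)])
  have "dmul (dmul D E) G s = (\<Sum>w\<in>W. \<Sum>c\<in>SC. if w + c = s then dmul D E w * G c else 0)"
    by (rule dmul_eq_double_sum)
       (use D E G fin finW subW sub in
         \<open>auto simp: nonneg_dulac_def exps_ge_dmul[of 0 D 0 E, simplified]\<close>)
  also have "\<dots> = (\<Sum>w\<in>W. \<Sum>c\<in>SC. \<Sum>a\<in>SA. \<Sum>b\<in>SB.
      if w + c = s \<and> a + b = w then D a * E b * G c else 0)"
  proof (intro sum.cong refl)
    fix w c assume "w \<in> W"
    then have "Re w \<le> Re s" unfolding W_def by auto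
    then have "dmul D E w = (\<Sum>a\<in>SA. \<Sum>b\<in>SB. if a + b = w then D a * E b else 0)"
      by (intro dmul_eq_double_sum) (use D0 E0 fin sub in auto)
    then show "(if w + c = s then dmul D E w * G c else 0) = (\<Sum>a\<in>SA. \<Sum>b\<in>SB.
      if w + c = s \<and> a + b = w then D a * E b * G c else 0)"
      by (cases "w + c = s") (auto simp: sum_distrib_right intro!: sum.cong)
  qed
  also have "\<dots> = (\<Sum>a\<in>SA. \<Sum>b\<in>SB. \<Sum>c\<in>SC. \<Sum>w\<in>W.
      if w + c = s \<and> a + b = w then D a * E b * G c else 0)"
    by (subst sum.swap, subst (1 2) sum.swap, rule sum.cong[OF refl], subst sum.swap,
        rule sum.cong[OF refl], subst sum.swap) (rule refl)
  also have "\<dots> = (\<Sum>a\<in>SA. \<Sum>b\<in>SB. \<Sum>c\<in>SC. if a + b + c = s then D a * E b * G c else 0)"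
  proof (intro sum.cong refl)
    fix a b c assume abc: "a \<in> SA" "b \<in> SB" "c \<in> SC"
    have "a + b + c = s \<Longrightarrow> G c \<noteq> 0 \<Longrightarrow> a + b \<in> W"
      using abc sub(3) SA SB exps_geD[OF G, of c] unfolding W_def by auto
    then show "(\<Sum>w\<in>W. if w + c = s \<and> a + b = w then D a * E b * G c else 0)
        = (if a + b + c = s then D a * E b * G c else 0)"
      using finW by (cases "G c = 0")
        (auto simp: sum.delta' eq_commute[of "a + b"] intro!: sum.neutral)
  qed
  finally show ?thesis .
qed

lemma dmul_assoc:
  assumes D: "nonneg_dulac D" and E: "nonneg_dulac E" and G: "nonneg_dulac G"
  shows "dmul (dmul D E) G = dmul D (dmul E G)"
proof
  fix s
  define supp_le where "supp_le F = {a. F a \<noteq> 0 \<and> Re a \<le> Re s}" for F :: dulac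
  have fin: "finite (supp_le F)" if "nonneg_dulac F" for F
    using that dulac_finite_le unfolding supp_le_def nonneg_dulac_def by blast
  have nonneg: "0 \<le> Re a" if "nonneg_dulac F" "a \<in> supp_le F" for F a
    using that exps_geD[of 0 F a] unfolding supp_le_def nonneg_dulac_def by auto
  have "dmul (dmul D E) G s = (\<Sum>a\<in>supp_le D. \<Sum>b\<in>supp_le E. \<Sum>c\<in>supp_le G.
      if a + b + c = s then D a * E b * G c else 0)"
    by (rule dmul_dmul_eq_triple_sum)
      (use D E G fin nonneg in \<open>auto simp: supp_le_def nonneg_dulac_def\<close>)
  also have "\<dots> = (\<Sum>b\<in>supp_le E. \<Sum>c\<in>supp_le G. \<Sum>a\<in>supp_le D.
      if b + c + a = s then E b * G c * D a else 0)"
    by (subst sum.swap, rule sum.cong[OF refl], subst sum.swap, intro sum.cong refl)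
       (auto simp: ac_simps)
  also have "\<dots> = dmul (dmul E G) D s"
    by (rule dmul_dmul_eq_triple_sum[symmetric])
       (use D E G fin nonneg in \<open>auto simp: supp_le_def nonneg_dulac_def\<close>)
  finally show "dmul (dmul D E) G s = dmul D (dmul E G) s"
    by (simp add: dmul_commute[of D])
qed

lemma dmul_add_right:
  assumes "nonneg_dulac D" "nonneg_dulac E" "nonneg_dulac G"
  shows "dmul D (\<lambda>l. E l + G l) = (\<lambda>l. dmul D E l + dmul D G l)"
proof
  fix s
  have eq: "dmul D F s = (\<Sum>a\<in>{a. D a \<noteq> 0 \<and> Re a \<le> Re s}. D a * F (s - a))"
    if "exps_ge 0 F" for F
    by (rule dmul_eq_sum_superset) (use assms that dulac_finite_le dmul_support_subset[of F D s] in
        \<open>auto simp: nonneg_dulac_def\<close>)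
  show "dmul D (\<lambda>l. E l + G l) s = dmul D E s + dmul D G s"
    using assms by (simp add: eq nonneg_dulac_def exps_ge_add sum.distrib distrib_left)
qed

lemma dmul_dmon_left: "dmul (dmon a p) D = (\<lambda>s. p * D (s - a))"
proof
  fix s
  have "dmul (dmon a p) D s = (\<Sum>x\<in>{a}. dmon a p x * D (s - x))"
    by (rule dmul_eq_sum_superset) (auto simp: dmon_def split: if_splits)
  then show "dmul (dmon a p) D s = p * D (s - a)" by (simp add: dmon_def)
qed

lemma dmul_dmon: "dmul (dmon a p) (dmon b q) = dmon (a + b) (p * q)"
  unfolding dmul_dmon_left by (auto simp: dmon_def algebra_simps)

text \<open>Dulac series whose exponents have nonnegative real parts form a ring under dmul, since
  all convolution sums are then finite. Orders of such series are handled by ring arithmetic.\<close>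
typedef ndulac = "{D. nonneg_dulac D}"
  using nonneg_dulac_zero by blast

lemma nonneg_dulac_Rep_ndulac: "nonneg_dulac (Rep_ndulac x)"
  using Rep_ndulac by auto

instantiation ndulac :: comm_ring_1
begin

definition "0 = Abs_ndulac (\<lambda>_. 0)"
definition "1 = Abs_ndulac (dmon 0 1)"
definition "x + y = Abs_ndulac (\<lambda>l. Rep_ndulac x l + Rep_ndulac y l)"
definition "- x = Abs_ndulac (\<lambda>l. - Rep_ndulac x l)"
definition "x - y = Abs_ndulac (\<lambda>l. Rep_ndulac x l - Rep_ndulac y l)"
definition "x * y = Abs_ndulac (dmul (Rep_ndulac x) (Rep_ndulac y))"

lemma Rep_ndulac_zero [simp]: "Rep_ndulac 0 = (\<lambda>_. 0)"
  unfolding zero_ndulac_def by (simp add: Abs_ndulac_inverse nonneg_dulac_zero)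

lemma Rep_ndulac_one [simp]: "Rep_ndulac 1 = dmon 0 1"
  unfolding one_ndulac_def by (simp add: Abs_ndulac_inverse nonneg_dulac_dmon)

lemma Rep_ndulac_plus [simp]: "Rep_ndulac (x + y) = (\<lambda>l. Rep_ndulac x l + Rep_ndulac y l)"
  unfolding plus_ndulac_def
  by (simp add: Abs_ndulac_inverse nonneg_dulac_add nonneg_dulac_Rep_ndulac)

lemma Rep_ndulac_uminus [simp]: "Rep_ndulac (- x) = (\<lambda>l. - Rep_ndulac x l)"
  unfolding uminus_ndulac_def
  by (simp add: Abs_ndulac_inverse nonneg_dulac_uminus nonneg_dulac_Rep_ndulac)

lemma Rep_ndulac_minus [simp]: "Rep_ndulac (x - y) = (\<lambda>l. Rep_ndulac x l - Rep_ndulac y l)"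
  using nonneg_dulac_add[OF nonneg_dulac_Rep_ndulac[of x]
    nonneg_dulac_uminus[OF nonneg_dulac_Rep_ndulac[of y]]]
  unfolding minus_ndulac_def by (simp add: Abs_ndulac_inverse)

lemma Rep_ndulac_times [simp]: "Rep_ndulac (x * y) = dmul (Rep_ndulac x) (Rep_ndulac y)"
  unfolding times_ndulac_def
  by (simp add: Abs_ndulac_inverse nonneg_dulac_dmul nonneg_dulac_Rep_ndulac)

instance
proof
  fix a b c :: ndulac
  show "a * b * c = a * (b * c)"
    by (simp add: Rep_ndulac_inject[symmetric] dmul_assoc nonneg_dulac_Rep_ndulac)
  show "a * b = b * a" by (simp add: Rep_ndulac_inject[symmetric] dmul_commute)
  show "1 * a = a" by (simp add: Rep_ndulac_inject[symmetric] dmul_dmon_left)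
  show "(a + b) * c = a * c + b * c"
    by (simp add: Rep_ndulac_inject[symmetric] dmul_commute[of _ "Rep_ndulac c"] dmul_add_right
        nonneg_dulac_Rep_ndulac)
  show "a + b + c = a + (b + c)" by (simp add: Rep_ndulac_inject[symmetric] add.assoc)
  show "a + b = b + a" by (simp add: Rep_ndulac_inject[symmetric] add.commute)
  show "0 + a = a" by (simp add: Rep_ndulac_inject[symmetric])
  show "- a + a = 0" by (simp add: Rep_ndulac_inject[symmetric])
  show "a - b = a + - b" by (simp add: Rep_ndulac_inject[symmetric])
  show "(0::ndulac) \<noteq> 1"
    by (simp add: Rep_ndulac_inject[symmetric] fun_eq_iff dmon_def)
qed

end

lemma Rep_ndulac_power: "Rep_ndulac (x ^ k) = dpow (Rep_ndulac x) k"
  by (induction k) simp_all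

lemma Rep_ndulac_prod: "Rep_ndulac (\<Prod>j<k. G j) = dprodn k (\<lambda>j. Rep_ndulac (G j))"
  by (induction k) simp_all

lemma Rep_ndulac_sum: "Rep_ndulac (\<Sum>j\<in>A. G j) = (\<lambda>l. \<Sum>j\<in>A. Rep_ndulac (G j) l)"
  by (induction A rule: infinite_finite_induct) auto

lemma nonneg_dulac_dpow: "nonneg_dulac D \<Longrightarrow> nonneg_dulac (dpow D k)"
  using nonneg_dulac_Rep_ndulac[of "Abs_ndulac D ^ k"]
  by (simp add: Rep_ndulac_power Abs_ndulac_inverse)

lemma dprodn_cong: "(\<And>j. j < k \<Longrightarrow> G j = G' j) \<Longrightarrow> dprodn k G = dprodn k G'"
  by (induction k) auto

lemma nonneg_dulac_dprodn: "(\<And>j. j < k \<Longrightarrow> nonneg_dulac (G j)) \<Longrightarrow> nonneg_dulac (dprodn k G)"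
proof -
  assume "\<And>j. j < k \<Longrightarrow> nonneg_dulac (G j)"
  then have "dprodn k G = Rep_ndulac (\<Prod>j<k. Abs_ndulac (G j))"
    unfolding Rep_ndulac_prod by (intro dprodn_cong) (simp add: Abs_ndulac_inverse)
  then show ?thesis using nonneg_dulac_Rep_ndulac by simp
qed

definition ord_ge :: "real \<Rightarrow> ndulac \<Rightarrow> bool" where
  "ord_ge c x \<longleftrightarrow> exps_ge c (Rep_ndulac x)"

lemma ord_ge_mono: "ord_ge c x \<Longrightarrow> d \<le> c \<Longrightarrow> ord_ge d x"
  unfolding ord_ge_def by (rule exps_ge_mono)

lemma ord_ge_zero_nonneg: "ord_ge 0 x"
  using nonneg_dulac_Rep_ndulac[of x] unfolding nonneg_dulac_def ord_ge_def by simp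

lemma ord_ge_0 [simp]: "ord_ge c 0"
  unfolding ord_ge_def by simp

lemma ord_ge_add: "ord_ge c x \<Longrightarrow> ord_ge c y \<Longrightarrow> ord_ge c (x + y)"
  unfolding ord_ge_def by (simp add: exps_ge_add)

lemma ord_ge_diff: "ord_ge c x \<Longrightarrow> ord_ge c y \<Longrightarrow> ord_ge c (x - y)"
  unfolding ord_ge_def using exps_ge_add[OF _ exps_ge_uminus] by simp

lemma ord_ge_mult: "ord_ge c x \<Longrightarrow> ord_ge d y \<Longrightarrow> ord_ge (c + d) (x * y)"
  unfolding ord_ge_def by (simp add: exps_ge_dmul)

lemma ord_ge_mult_left: "ord_ge d y \<Longrightarrow> ord_ge d (x * y)"
  using ord_ge_mult[OF ord_ge_zero_nonneg] by fastforce

lemma ord_ge_mult_right: "ord_ge c x \<Longrightarrow> ord_ge c (x * y)"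
  using ord_ge_mult[OF _ ord_ge_zero_nonneg] by fastforce

lemma ord_ge_sum: "(\<And>i. i \<in> A \<Longrightarrow> ord_ge c (G i)) \<Longrightarrow> ord_ge c (\<Sum>i\<in>A. G i)"
  by (induction A rule: infinite_finite_induct) (auto intro: ord_ge_add)

lemma ord_ge_prod:
  "finite A \<Longrightarrow> (\<And>j. j \<in> A \<Longrightarrow> ord_ge (c j) (G j)) \<Longrightarrow> ord_ge (\<Sum>j\<in>A. c j) (\<Prod>j\<in>A. G j)"
  by (induction A rule: finite_induct) (simp_all add: ord_ge_zero_nonneg ord_ge_mult)

lemma ord_ge_power: "ord_ge c x \<Longrightarrow> ord_ge (real k * c) (x ^ k)"
  using ord_ge_prod[of "{..<k}" "\<lambda>_. c" "\<lambda>_. x"] by simp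

lemma Rep_ndulac_eq_below: "ord_ge R (x - y) \<Longrightarrow> Re s < R \<Longrightarrow> Rep_ndulac x s = Rep_ndulac y s"
  unfolding ord_ge_def exps_ge_def by force

lemma ord_ge_power_remainder:
  assumes "ord_ge r b" "0 \<le> r"
  shows "ord_ge (2 * r) ((a + b) ^ k - a ^ k - of_nat k * a ^ (k - 1) * b)"
proof (induction k)
  case (Suc k)
  have "(a + b) ^ Suc k - a ^ Suc k - of_nat (Suc k) * a ^ (Suc k - 1) * b
      = (a + b) * ((a + b) ^ k - a ^ k - of_nat k * a ^ (k - 1) * b)
        + of_nat k * a ^ (k - 1) * (b * b)"
    by (cases k) (simp_all add: algebra_simps)
  moreover have "ord_ge (r + r) (of_nat k * a ^ (k - 1) * (b * b))"
    by (rule ord_ge_mult_left[OF ord_ge_mult[OF assms(1) assms(1)]])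
  ultimately show ?case using ord_ge_mult_left[OF Suc.IH] by (simp add: ord_ge_add)
qed simp

lemma ord_ge_prod_remainder:
  fixes P d :: "nat \<Rightarrow> ndulac"
  assumes "\<And>j. ord_ge r (d j)" "0 \<le> r"
  shows "ord_ge (2 * r) ((\<Prod>j<K. P j + d j) - (\<Prod>j<K. P j)
          - (\<Sum>j<K. d j * (\<Prod>i\<in>{..<K} - {j}. P i)))"
proof (induction K)
  case (Suc K)
  define S where "S = (\<Sum>j<K. d j * (\<Prod>i\<in>{..<K} - {j}. P i))"
  define E where "E = (\<Prod>j<K. P j + d j) - (\<Prod>j<K. P j) - S"
  have "(\<Sum>j<Suc K. d j * (\<Prod>i\<in>{..<Suc K} - {j}. P i)) = S * P K + d K * (\<Prod>j<K. P j)"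
  proof -
    have "{..<Suc K} - {j} = insert K ({..<K} - {j})" if "j < K" for j
      using that by auto
    then have "(\<Sum>j<K. d j * (\<Prod>i\<in>{..<Suc K} - {j}. P i)) = S * P K"
      unfolding S_def sum_distrib_right by (intro sum.cong) (auto simp: ac_simps)
    moreover have "{..<Suc K} - {K} = {..<K}" by auto
    ultimately show ?thesis by simp
  qed
  then have "(\<Prod>j<Suc K. P j + d j) - (\<Prod>j<Suc K. P j) - (\<Sum>j<Suc K. d j * (\<Prod>i\<in>{..<Suc K} - {j}. P i))
      = S * d K + E * (P K + d K)"
    by (simp add: E_def algebra_simps)
  moreover have "ord_ge r S"
    unfolding S_def by (rule ord_ge_sum) (metis ord_ge_mult_right assms(1) mult.commute)
  ultimately show ?case
    using ord_ge_mult[of r S r "d K"] ord_ge_mult_right[of "2 * r" E "P K + d K"] Suc.IH assms(1)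
    by (simp add: E_def S_def ord_ge_add)
qed simp

lemma ord_ge_prod_power_remainder:
  fixes a b :: "nat \<Rightarrow> ndulac"
  assumes b: "\<And>j. ord_ge r (b j)" and r: "0 \<le> r"
  shows "ord_ge (2 * r) ((\<Prod>j<K. (a j + b j) ^ k j) - (\<Prod>j<K. a j ^ k j)
          - (\<Sum>j<K. of_nat (k j) * a j ^ (k j - 1) * b j * (\<Prod>i\<in>{..<K} - {j}. a i ^ k i)))"
proof -
  define e where "e j = (a j + b j) ^ k j - a j ^ k j - of_nat (k j) * a j ^ (k j - 1) * b j" for j
  define d where "d j = (a j + b j) ^ k j - a j ^ k j" for j
  have e: "ord_ge (2 * r) (e j)" for j
    unfolding e_def by (rule ord_ge_power_remainder[OF b r])
  have "ord_ge r (e j + of_nat (k j) * a j ^ (k j - 1) * b j)" for j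
    using e[of j] r by (intro ord_ge_add ord_ge_mult_left b) (auto elim: ord_ge_mono)
  then have d: "ord_ge r (d j)" for j by (simp add: d_def e_def)
  have "(\<Prod>j<K. (a j + b j) ^ k j) - (\<Prod>j<K. a j ^ k j)
          - (\<Sum>j<K. of_nat (k j) * a j ^ (k j - 1) * b j * (\<Prod>i\<in>{..<K} - {j}. a i ^ k i))
     = ((\<Prod>j<K. a j ^ k j + d j) - (\<Prod>j<K. a j ^ k j)
          - (\<Sum>j<K. d j * (\<Prod>i\<in>{..<K} - {j}. a i ^ k i)))
       + (\<Sum>j<K. e j * (\<Prod>i\<in>{..<K} - {j}. a i ^ k i))"
    by (simp add: d_def e_def algebra_simps sum.distrib[symmetric] sum_subtractf[symmetric])
  moreover have "ord_ge (2 * r) ((\<Prod>j<K. a j ^ k j + d j) - (\<Prod>j<K. a j ^ k j)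
          - (\<Sum>j<K. d j * (\<Prod>i\<in>{..<K} - {j}. a i ^ k i)))"
    by (rule ord_ge_prod_remainder[OF d r])
  moreover have "ord_ge (2 * r) (\<Sum>j<K. e j * (\<Prod>i\<in>{..<K} - {j}. a i ^ k i))"
    by (intro ord_ge_sum ord_ge_mult_right e)
  ultimately show ?thesis by (simp only: ord_ge_add)
qed

lemma ord_ge_prod_power_diff:
  fixes a b :: "nat \<Rightarrow> ndulac"
  assumes b: "\<And>j. ord_ge r (b j)" and r: "0 \<le> r"
  shows "ord_ge r ((\<Prod>j<K. (a j + b j) ^ k j) - (\<Prod>j<K. a j ^ k j))"
proof -
  have "ord_ge r ((\<Prod>j<K. (a j + b j) ^ k j) - (\<Prod>j<K. a j ^ k j)
          - (\<Sum>j<K. of_nat (k j) * a j ^ (k j - 1) * b j * (\<Prod>i\<in>{..<K} - {j}. a i ^ k i)))"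
    by (rule ord_ge_mono[OF ord_ge_prod_power_remainder[OF b r]]) (use r in simp)
  moreover have
    "ord_ge r (\<Sum>j<K. of_nat (k j) * a j ^ (k j - 1) * b j * (\<Prod>i\<in>{..<K} - {j}. a i ^ k i))"
    by (intro ord_ge_sum ord_ge_mult_right ord_ge_mult_left b)
  ultimately show ?thesis using ord_ge_add by fastforce
qed

section \<open>Substitution into power series\<close>

lemma nonneg_dulacI: "dulac D \<Longrightarrow> exps_ge c D \<Longrightarrow> 0 \<le> c \<Longrightarrow> nonneg_dulac D"
  unfolding nonneg_dulac_def by (auto elim: exps_ge_mono)

lemma ord_ge_Abs_ndulac: "nonneg_dulac D \<Longrightarrow> ord_ge c (Abs_ndulac D) \<longleftrightarrow> exps_ge c D"
  unfolding ord_ge_def by (simp add: Abs_ndulac_inverse)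

definition X_nd :: ndulac where
  "X_nd = Abs_ndulac (dmon 1 1)"

definition const_nd :: "complex \<Rightarrow> ndulac" where
  "const_nd c = Abs_ndulac (dmon 0 [:c:])"

lemma Rep_X_nd_power: "Rep_ndulac (X_nd ^ n) = dmon (of_nat n) 1"
  by (induction n)
    (simp_all add: X_nd_def Abs_ndulac_inverse nonneg_dulac_dmon dmul_dmon algebra_simps)

lemma Rep_const_nd: "Rep_ndulac (const_nd c) = dmon 0 [:c:]"
  unfolding const_nd_def by (simp add: Abs_ndulac_inverse nonneg_dulac_dmon)

lemma const_nd_mult: "const_nd (c * d) = const_nd c * const_nd d"
  by (simp add: Rep_ndulac_inject[symmetric] Rep_const_nd dmul_dmon mult.commute)

lemma of_nat_eq_const_nd: "(of_nat n :: ndulac) = const_nd (of_nat n)"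
proof (induction n)
  case (Suc n)
  have "const_nd 1 = 1" by (simp add: Rep_ndulac_inject[symmetric] Rep_const_nd one_pCons)
  moreover have "const_nd (a + b) = const_nd a + const_nd b" for a b
    by (simp add: Rep_ndulac_inject[symmetric] Rep_const_nd fun_eq_iff dmon_def)
  ultimately show ?case using Suc by (simp add: add.commute)
qed (simp add: Rep_ndulac_inject[symmetric] Rep_const_nd fun_eq_iff dmon_def)

lemma ord_ge_X_nd_power: "ord_ge (real n) (X_nd ^ n)"
  unfolding ord_ge_def Rep_X_nd_power by (rule exps_ge_dmon) simp

definition monom_nd :: "nat \<Rightarrow> (nat \<Rightarrow> ndulac) \<Rightarrow> (nat \<Rightarrow> nat) \<Rightarrow> ndulac" where
  "monom_nd k y \<alpha> = X_nd ^ \<alpha> 0 * (\<Prod>j<k. y j ^ \<alpha> (Suc j))"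

lemma dterm_eq_Rep_monom_nd:
  assumes "\<And>j. j < k \<Longrightarrow> nonneg_dulac (Y j)"
  shows "dterm k Y \<alpha> = Rep_ndulac (monom_nd k (\<lambda>j. Abs_ndulac (Y j)) \<alpha>)"
proof -
  have "dprodn k (\<lambda>j. dpow (Y j) (\<alpha> (Suc j)))
      = dprodn k (\<lambda>j. Rep_ndulac (Abs_ndulac (Y j) ^ \<alpha> (Suc j)))"
    by (rule dprodn_cong) (simp add: Rep_ndulac_power Abs_ndulac_inverse assms)
  then show ?thesis
    unfolding dterm_def monom_nd_def by (simp add: Rep_ndulac_prod Rep_X_nd_power)
qed

definition mweight :: "nat \<Rightarrow> real \<Rightarrow> (nat \<Rightarrow> nat) \<Rightarrow> real" where
  "mweight k c \<alpha> = real (\<alpha> 0) + c * real (\<Sum>j<k. \<alpha> (Suc j))"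

lemma ord_ge_monom_nd:
  assumes "\<And>j. j < k \<Longrightarrow> ord_ge c (y j)"
  shows "ord_ge (mweight k c \<alpha>) (monom_nd k y \<alpha>)"
proof -
  have "ord_ge (\<Sum>j<k. real (\<alpha> (Suc j)) * c) (\<Prod>j<k. y j ^ \<alpha> (Suc j))"
    by (rule ord_ge_prod) (auto intro: ord_ge_power assms)
  then have "ord_ge (c * real (\<Sum>j<k. \<alpha> (Suc j))) (\<Prod>j<k. y j ^ \<alpha> (Suc j))"
    by (simp add: sum_distrib_left mult.commute)
  then show ?thesis
    unfolding monom_nd_def mweight_def by (rule ord_ge_mult[OF ord_ge_X_nd_power])
qed

definition substitutable :: "nat \<Rightarrow> real \<Rightarrow> (nat \<Rightarrow> dulac) \<Rightarrow> bool" where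
  "substitutable k c Y \<longleftrightarrow> 0 < c \<and> (\<forall>j<k. dulac (Y j) \<and> exps_ge c (Y j))"

lemma substitutableD:
  assumes "substitutable k c Y"
  shows "0 < c" "j < k \<Longrightarrow> nonneg_dulac (Y j)" "j < k \<Longrightarrow> exps_ge c (Y j)"
  using assms unfolding substitutable_def by (auto intro: nonneg_dulacI)

lemma dterm_neq_zero_mweight:
  assumes Y: "substitutable k c Y" and nz: "dterm k Y \<alpha> s \<noteq> 0"
  shows "mweight k c \<alpha> \<le> Re s"
proof -
  have Ynn: "\<And>j. j < k \<Longrightarrow> nonneg_dulac (Y j)" using substitutableD[OF Y] by blast
  have "ord_ge (mweight k c \<alpha>) (monom_nd k (\<lambda>j. Abs_ndulac (Y j)) \<alpha>)"
    by (rule ord_ge_monom_nd) (simp add: ord_ge_Abs_ndulac Ynn substitutableD[OF Y])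
  moreover have "Rep_ndulac (monom_nd k (\<lambda>j. Abs_ndulac (Y j)) \<alpha>) s \<noteq> 0"
    using nz dterm_eq_Rep_monom_nd[OF Ynn] by simp
  ultimately show ?thesis unfolding ord_ge_def exps_ge_def by blast
qed

definition psum_nd :: "nat \<Rightarrow> ((nat \<Rightarrow> nat) \<Rightarrow> complex) \<Rightarrow> (nat \<Rightarrow> ndulac) \<Rightarrow> (nat \<Rightarrow> nat) set \<Rightarrow> ndulac"
  where "psum_nd k g y U = (\<Sum>\<alpha>\<in>U. const_nd (g \<alpha>) * monom_nd k y \<alpha>)"

lemma psum_nd_cong: "(\<And>j. j < k \<Longrightarrow> y j = z j) \<Longrightarrow> psum_nd k g y U = psum_nd k g z U"
  unfolding psum_nd_def monom_nd_def
    by (intro sum.cong refl arg_cong2[where f="(*)"] prod.cong) auto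

definition low_indices :: "nat \<Rightarrow> real \<Rightarrow> real \<Rightarrow> (nat \<Rightarrow> nat) set" where
  "low_indices k c R = {\<alpha> \<in> MI (Suc k). mweight k c \<alpha> < R}"

lemma finite_MI_bounded: "finite {\<alpha> \<in> MI m. \<forall>i. \<alpha> i \<le> N}"
proof -
  let ?S = "{\<alpha> \<in> MI m. \<forall>i. \<alpha> i \<le> N}"
  let ?f = "\<lambda>\<alpha>. map \<alpha> [0..<m]"
  have "inj_on ?f ?S"
  proof
    fix x y assume xy: "x \<in> ?S" "y \<in> ?S" "?f x = ?f y"
    show "x = y"
    proof
      fix i show "x i = y i"
      proof (cases "i < m")
        case True
        then have "?f x ! i = ?f y ! i" using xy by simp
        with True show ?thesis by simp
      next
        case False
        then show ?thesis using xy unfolding MI_def by auto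
      qed
    qed
  qed
  moreover have "?f ` ?S \<subseteq> {xs. set xs \<subseteq> {..N} \<and> length xs = m}" by auto
  then have "finite (?f ` ?S)" by (rule finite_subset) (rule finite_lists_length_eq, simp)
  ultimately show ?thesis using finite_imageD by blast
qed

lemma mweight_ge:
  assumes "0 \<le> c"
  shows "real (\<alpha> 0) \<le> mweight k c \<alpha>" and "i < k \<Longrightarrow> c * real (\<alpha> (Suc i)) \<le> mweight k c \<alpha>"
proof -
  show "real (\<alpha> 0) \<le> mweight k c \<alpha>"
    unfolding mweight_def using assms by (simp add: sum_nonneg)
  assume "i < k"
  then have "\<alpha> (Suc i) \<le> (\<Sum>j<k. \<alpha> (Suc j))"
    using member_le_sum[of i "{..<k}" "\<lambda>j. \<alpha> (Suc j)"] by simp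
  then have "real (\<alpha> (Suc i)) \<le> real (\<Sum>j<k. \<alpha> (Suc j))" by (simp only: of_nat_le_iff)
  then have "c * real (\<alpha> (Suc i)) \<le> c * real (\<Sum>j<k. \<alpha> (Suc j))"
    using assms by (rule mult_left_mono)
  then show "c * real (\<alpha> (Suc i)) \<le> mweight k c \<alpha>" unfolding mweight_def by simp
qed

lemma finite_low_indices:
  assumes c: "0 < c"
  shows "finite (low_indices k c R)"
proof -
  obtain N :: nat where N: "R \<le> real N" "R / c \<le> real N"
    by (metis max.bounded_iff real_arch_simple)
  have "\<alpha> i \<le> N" if \<alpha>: "\<alpha> \<in> MI (Suc k)" "mweight k c \<alpha> < R" for \<alpha> i
  proof (cases i)
    case 0
    then show ?thesis using mweight_ge(1)[of c \<alpha> k] c \<alpha>(2) N(1) by simp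
  next
    case (Suc i')
    show ?thesis
    proof (cases "i' < k")
      case True
      then have "c * real (\<alpha> (Suc i')) < R" using mweight_ge(2)[of c i' k \<alpha>] c \<alpha>(2) by simp
      then have "real (\<alpha> (Suc i')) < R / c" using c by (simp add: field_simps)
      then show ?thesis using N(2) Suc by simp
    qed (use \<alpha>(1) Suc in \<open>simp add: MI_def\<close>)
  qed
  then have "low_indices k c R \<subseteq> {\<alpha> \<in> MI (Suc k). \<forall>i. \<alpha> i \<le> N}"
    unfolding low_indices_def by blast
  then show ?thesis by (rule finite_subset[OF _ finite_MI_bounded])
qed

lemma dsubst_eq_psum_nd:
  assumes Y: "substitutable k c Y"
    and s: "Re s < R"
  shows "dsubst k g Y s = Rep_ndulac (psum_nd k g (\<lambda>j. Abs_ndulac (Y j)) (low_indices k c R)) s"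
proof -
  have Ynn: "\<And>j. j < k \<Longrightarrow> nonneg_dulac (Y j)" using substitutableD[OF Y] by blast
  have "{\<alpha>. \<alpha> \<in> MI (Suc k) \<and> g \<alpha> \<noteq> 0 \<and> dterm k Y \<alpha> s \<noteq> 0} \<subseteq> low_indices k c R"
    using dterm_neq_zero_mweight[OF Y] s unfolding low_indices_def by fastforce
  then have "dsubst k g Y s = (\<Sum>\<alpha>\<in>low_indices k c R. smult (g \<alpha>) (dterm k Y \<alpha> s))"
    unfolding dsubst_def
    by (intro sum.mono_neutral_left finite_low_indices substitutableD(1)[OF Y])
      (auto simp: low_indices_def)
  also have "\<dots> = Rep_ndulac (psum_nd k g (\<lambda>j. Abs_ndulac (Y j)) (low_indices k c R)) s"
    unfolding psum_nd_def Rep_ndulac_sum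
      by (simp add: Rep_const_nd dmul_dmon_left dterm_eq_Rep_monom_nd[OF Ynn])
  finally show ?thesis .
qed

lemma nonneg_dulac_dsubst:
  assumes Y: "substitutable k c Y"
  shows "nonneg_dulac (dsubst k g Y)"
  unfolding nonneg_dulac_def dulac_def exps_ge_def
proof (intro conjI allI impI)
  fix R
  let ?P = "psum_nd k g (\<lambda>j. Abs_ndulac (Y j)) (low_indices k c R)"
  have "{l. dsubst k g Y l \<noteq> 0 \<and> Re l < R} \<subseteq> {l. Rep_ndulac ?P l \<noteq> 0 \<and> Re l < R}"
    using dsubst_eq_psum_nd[OF Y] by auto
  moreover have "finite {l. Rep_ndulac ?P l \<noteq> 0 \<and> Re l < R}"
    using nonneg_dulac_Rep_ndulac[of ?P] unfolding nonneg_dulac_def dulac_def by auto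
  ultimately show "finite {l. dsubst k g Y l \<noteq> 0 \<and> Re l < R}" by (rule finite_subset)
next
  fix l assume "dsubst k g Y l \<noteq> 0"
  then obtain \<alpha> where "dterm k Y \<alpha> l \<noteq> 0"
    unfolding dsubst_def by (auto elim: sum.not_neutral_contains_not_neutral)
  then have "mweight k c \<alpha> \<le> Re l" using dterm_neq_zero_mweight[OF Y] by blast
  moreover have "0 \<le> mweight k c \<alpha>" unfolding mweight_def using substitutableD(1)[OF Y]
    by (simp add: sum_nonneg)
  ultimately show "0 \<le> Re l" by linarith
qed

lemma ord_ge_dsubst_minus_psum_nd:
  assumes Y: "substitutable k c Y"
  shows "ord_ge R
    (Abs_ndulac (dsubst k g Y) - psum_nd k g (\<lambda>j. Abs_ndulac (Y j)) (low_indices k c R))"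
  unfolding ord_ge_def exps_ge_def
  using dsubst_eq_psum_nd[OF Y] nonneg_dulac_dsubst[OF Y, of g]
  by (auto simp: Abs_ndulac_inverse not_le[symmetric])

definition incr :: "nat \<Rightarrow> (nat \<Rightarrow> nat) \<Rightarrow> nat \<Rightarrow> nat" where
  "incr j \<beta> = \<beta>(Suc j := \<beta> (Suc j) + 1)"

lemma mweight_incr: "j < k \<Longrightarrow> mweight k c (incr j \<beta>) = mweight k c \<beta> + c"
proof -
  assume j: "j < k"
  have "(\<Sum>i<k. incr j \<beta> (Suc i)) = (\<Sum>i<k. \<beta> (Suc i) + (if i = j then 1 else 0))"
    by (rule sum.cong) (auto simp: incr_def)
  also have "\<dots> = (\<Sum>i<k. \<beta> (Suc i)) + 1" using j by (simp add: sum.distrib)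
  finally show ?thesis unfolding mweight_def by (simp add: incr_def algebra_simps)
qed

lemma incr_in_MI_iff: "j < k \<Longrightarrow> incr j \<beta> \<in> MI (Suc k) \<longleftrightarrow> \<beta> \<in> MI (Suc k)"
  unfolding MI_def incr_def by auto

lemma incr_in_low_indices_iff:
  "j < k \<Longrightarrow> {\<beta> \<in> MI (Suc k). incr j \<beta> \<in> low_indices k c R} = low_indices k c (R - c)"
  unfolding low_indices_def by (auto simp: incr_in_MI_iff mweight_incr)

definition monom_nd_deriv :: "nat \<Rightarrow> (nat \<Rightarrow> ndulac) \<Rightarrow> nat \<Rightarrow> (nat \<Rightarrow> nat) \<Rightarrow> ndulac" where
  "monom_nd_deriv k a j \<alpha> = X_nd ^ \<alpha> 0 * (of_nat (\<alpha> (Suc j)) * a j ^ (\<alpha> (Suc j) - 1) *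
     (\<Prod>i\<in>{..<k} - {j}. a i ^ \<alpha> (Suc i)))"

lemma monom_nd_deriv_incr:
  assumes "j < k"
  shows "monom_nd_deriv k a j (incr j \<beta>) = of_nat (\<beta> (Suc j) + 1) * monom_nd k a \<beta>"
proof -
  have "(\<Prod>i\<in>{..<k} - {j}. a i ^ incr j \<beta> (Suc i)) = (\<Prod>i\<in>{..<k} - {j}. a i ^ \<beta> (Suc i))"
    by (rule prod.cong) (auto simp: incr_def)
  moreover have "(\<Prod>i<k. a i ^ \<beta> (Suc i)) = a j ^ \<beta> (Suc j) * (\<Prod>i\<in>{..<k} - {j}. a i ^ \<beta> (Suc i))"
    by (rule prod.remove) (use assms in auto)
  ultimately show ?thesis
    unfolding monom_nd_deriv_def monom_nd_def by (simp add: incr_def ac_simps)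
qed

lemma sum_monom_nd_deriv_eq_psum_nd_pdy:
  assumes j: "j < k" and U: "finite U" "U \<subseteq> MI (Suc k)"
  shows "(\<Sum>\<alpha>\<in>U. const_nd (g \<alpha>) * monom_nd_deriv k a j \<alpha>)
       = psum_nd k (pdy g j) a {\<beta> \<in> MI (Suc k). incr j \<beta> \<in> U}"
proof -
  let ?T = "\<lambda>\<alpha>. const_nd (g \<alpha>) * monom_nd_deriv k a j \<alpha>"
  have "(\<Sum>\<alpha>\<in>U. ?T \<alpha>) = (\<Sum>\<alpha>\<in>{\<alpha>\<in>U. \<alpha> (Suc j) \<noteq> 0}. ?T \<alpha>)"
    by (rule sum.mono_neutral_right) (auto simp: U monom_nd_deriv_def)
  also have "\<dots> = (\<Sum>\<beta>\<in>{\<beta> \<in> MI (Suc k). incr j \<beta> \<in> U}. ?T (incr j \<beta>))"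
  proof (rule sum.reindex_bij_witness[of _ "incr j" "\<lambda>\<alpha>. \<alpha>(Suc j := \<alpha> (Suc j) - 1)"])
    fix \<alpha> assume "\<alpha> \<in> {\<alpha>\<in>U. \<alpha> (Suc j) \<noteq> 0}"
    moreover have "\<alpha>(Suc j := \<alpha> (Suc j) - 1) \<in> MI (Suc k)" if "\<alpha> \<in> U"
      using that U(2) unfolding MI_def by auto
    ultimately show "incr j (\<alpha>(Suc j := \<alpha> (Suc j) - 1)) = \<alpha>"
      "\<alpha>(Suc j := \<alpha> (Suc j) - 1) \<in> {\<beta> \<in> MI (Suc k). incr j \<beta> \<in> U}"
      "?T (incr j (\<alpha>(Suc j := \<alpha> (Suc j) - 1))) = ?T \<alpha>"
      by (auto simp: incr_def)
  qed (auto simp: incr_def incr_in_MI_iff[OF j])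
  also have "\<dots> = psum_nd k (pdy g j) a {\<beta> \<in> MI (Suc k). incr j \<beta> \<in> U}"
    unfolding psum_nd_def monom_nd_deriv_incr[OF j] pdy_def incr_def[symmetric]
    by (simp add: const_nd_mult of_nat_eq_const_nd ac_simps)
  finally show ?thesis .
qed

lemma ord_ge_monom_nd_taylor:
  assumes b: "\<And>j. ord_ge r (b j)" and r: "0 \<le> r"
  shows "ord_ge (2 * r) (monom_nd k (\<lambda>j. a j + b j) \<alpha> - monom_nd k a \<alpha>
           - (\<Sum>j<k. b j * monom_nd_deriv k a j \<alpha>))"
proof -
  have "monom_nd k (\<lambda>j. a j + b j) \<alpha> - monom_nd k a \<alpha> - (\<Sum>j<k. b j * monom_nd_deriv k a j \<alpha>)
      = X_nd ^ \<alpha> 0 * ((\<Prod>j<k. (a j + b j) ^ \<alpha> (Suc j)) - (\<Prod>j<k. a j ^ \<alpha> (Suc j))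
          - (\<Sum>j<k. of_nat (\<alpha> (Suc j)) * a j ^ (\<alpha> (Suc j) - 1) * b j
               * (\<Prod>i\<in>{..<k} - {j}. a i ^ \<alpha> (Suc i))))"
    unfolding monom_nd_def monom_nd_deriv_def
    by (simp add: algebra_simps sum_distrib_left)
  then show ?thesis
    using ord_ge_mult_left[OF ord_ge_prod_power_remainder[OF b r]] by simp
qed

lemma ord_ge_psum_nd_taylor:
  assumes b: "\<And>j. ord_ge r (b j)" and r: "0 \<le> r" and U: "finite U" "U \<subseteq> MI (Suc k)"
  shows "ord_ge (2 * r) (psum_nd k g (\<lambda>j. a j + b j) U - psum_nd k g a U
           - (\<Sum>j<k. b j * psum_nd k (pdy g j) a {\<beta> \<in> MI (Suc k). incr j \<beta> \<in> U}))"
proof -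
  have "(\<Sum>j<k. b j * psum_nd k (pdy g j) a {\<beta> \<in> MI (Suc k). incr j \<beta> \<in> U})
      = (\<Sum>\<alpha>\<in>U. const_nd (g \<alpha>) * (\<Sum>j<k. b j * monom_nd_deriv k a j \<alpha>))"
    by (simp add: sum_monom_nd_deriv_eq_psum_nd_pdy[OF _ U, symmetric] sum_distrib_left
        sum.swap[of _ U] ac_simps)
  then have "psum_nd k g (\<lambda>j. a j + b j) U - psum_nd k g a U
           - (\<Sum>j<k. b j * psum_nd k (pdy g j) a {\<beta> \<in> MI (Suc k). incr j \<beta> \<in> U})
      = (\<Sum>\<alpha>\<in>U. const_nd (g \<alpha>) * (monom_nd k (\<lambda>j. a j + b j) \<alpha> - monom_nd k a \<alpha>
           - (\<Sum>j<k. b j * monom_nd_deriv k a j \<alpha>)))"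
    unfolding psum_nd_def by (simp add: right_diff_distrib sum_subtractf)
  then show ?thesis
    using ord_ge_sum[OF ord_ge_mult_left[OF ord_ge_monom_nd_taylor[OF b r]]] by simp
qed

lemma ord_ge_psum_nd_diff:
  assumes b: "\<And>j. ord_ge r (b j)" and r: "0 \<le> r"
  shows "ord_ge r (psum_nd k g (\<lambda>j. a j + b j) U - psum_nd k g a U)"
proof -
  have "psum_nd k g (\<lambda>j. a j + b j) U - psum_nd k g a U
      = (\<Sum>\<alpha>\<in>U. const_nd (g \<alpha>) * (X_nd ^ \<alpha> 0 *
           ((\<Prod>j<k. (a j + b j) ^ \<alpha> (Suc j)) - (\<Prod>j<k. a j ^ \<alpha> (Suc j)))))"
    unfolding psum_nd_def monom_nd_def by (simp add: right_diff_distrib sum_subtractf)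
  then show ?thesis
    using ord_ge_sum[OF ord_ge_mult_left[OF ord_ge_mult_left[OF ord_ge_prod_power_diff[OF b r]]]]
    by simp
qed

lemma ord_ge_Abs_ndulac_diff:
  assumes "nonneg_dulac D" "nonneg_dulac E"
  shows "ord_ge c (Abs_ndulac D - Abs_ndulac E) \<longleftrightarrow> exps_ge c (\<lambda>l. D l - E l)"
  using assms unfolding ord_ge_def by (simp add: Abs_ndulac_inverse)

lemma dsubst_eq_below:
  assumes R: "0 \<le> R" and Y: "substitutable k c Y" and Y': "substitutable k c Y'"
    and close: "\<And>j. j < k \<Longrightarrow> exps_ge R (\<lambda>l. Y j l - Y' j l)"
    and s: "Re s < R"
  shows "dsubst k g Y s = dsubst k g Y' s"
proof -
  let ?U = "low_indices k c R" and ?y = "\<lambda>j. Abs_ndulac (Y j)" and ?y' = "\<lambda>j. Abs_ndulac (Y' j)"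
  define b where "b j = (if j < k then ?y j - ?y' j else 0)" for j
  have b: "ord_ge R (b j)" for j
    unfolding b_def using close substitutableD(2)[OF Y] substitutableD(2)[OF Y']
    by (simp add: ord_ge_Abs_ndulac_diff)
  have "psum_nd k g ?y ?U = psum_nd k g (\<lambda>j. ?y' j + b j) ?U"
    by (rule psum_nd_cong) (simp add: b_def)
  then have "Abs_ndulac (dsubst k g Y) - Abs_ndulac (dsubst k g Y')
      = (Abs_ndulac (dsubst k g Y) - psum_nd k g ?y ?U) -
        (Abs_ndulac (dsubst k g Y') - psum_nd k g ?y' ?U)
        + (psum_nd k g (\<lambda>j. ?y' j + b j) ?U - psum_nd k g ?y' ?U)"
    by simp
  moreover have "ord_ge R \<dots>"
    by (intro ord_ge_add ord_ge_diff ord_ge_dsubst_minus_psum_nd ord_ge_psum_nd_diff b R Y Y')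
  ultimately have "ord_ge R (Abs_ndulac (dsubst k g Y) - Abs_ndulac (dsubst k g Y'))" by simp
  then have "Rep_ndulac (Abs_ndulac (dsubst k g Y)) s = Rep_ndulac (Abs_ndulac (dsubst k g Y')) s"
    using s by (rule Rep_ndulac_eq_below)
  then show ?thesis
    by (simp add: Abs_ndulac_inverse nonneg_dulac_dsubst[OF Y] nonneg_dulac_dsubst[OF Y'])
qed

lemma ord_ge_psum_nd_low_indices:
  assumes Y: "substitutable k c Y" and g: "exps_ge V (dsubst k g Y)" and "V \<le> R"
  shows "ord_ge V (psum_nd k g (\<lambda>j. Abs_ndulac (Y j)) (low_indices k c R))"
proof -
  let ?P = "psum_nd k g (\<lambda>j. Abs_ndulac (Y j)) (low_indices k c R)"
  have "ord_ge V (Abs_ndulac (dsubst k g Y))"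
    using g by (simp add: ord_ge_Abs_ndulac nonneg_dulac_dsubst[OF Y])
  moreover have "ord_ge V (Abs_ndulac (dsubst k g Y) - ?P)"
    using ord_ge_dsubst_minus_psum_nd[OF Y] \<open>V \<le> R\<close> by (rule ord_ge_mono)
  ultimately have "ord_ge V (Abs_ndulac (dsubst k g Y) - (Abs_ndulac (dsubst k g Y) - ?P))"
    by (rule ord_ge_diff)
  then show ?thesis by simp
qed

text \<open>Taylor expansion of g around its root Y: the linear term has order R + V and the
  remainder order 2 R.\<close>
lemma exps_ge_dsubst_near_root:
  assumes R: "0 \<le> R" and V: "0 \<le> V"
    and Y: "substitutable k c Y" and Y': "substitutable k c Y'"
    and close: "\<And>j. j < k \<Longrightarrow> exps_ge R (\<lambda>l. Y j l - Y' j l)"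
    and root: "dsubst k g Y = (\<lambda>_. 0)"
    and deriv: "\<And>j. j < k \<Longrightarrow> exps_ge V (dsubst k (pdy g j) Y')"
    and W: "W \<le> 2 * R" "W \<le> R + V"
  shows "exps_ge W (dsubst k g Y')"
proof -
  have c: "0 < c" by (rule substitutableD(1)[OF Y])
  define R' where "R' = 2 * R + V + c + \<bar>W\<bar>"
  have R': "W \<le> R'" "V \<le> R' - c" unfolding R'_def using R V c by auto
  let ?U = "low_indices k c R'" and ?y = "\<lambda>j. Abs_ndulac (Y j)" and ?y' = "\<lambda>j. Abs_ndulac (Y' j)"
  define b where "b j = (if j < k then ?y j - ?y' j else 0)" for j
  have b: "ord_ge R (b j)" for j
    unfolding b_def using close substitutableD(2)[OF Y] substitutableD(2)[OF Y']
    by (simp add: ord_ge_Abs_ndulac_diff)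
  define X where "X = psum_nd k g (\<lambda>j. ?y' j + b j) ?U"
  define S where "S = (\<Sum>j<k. b j * psum_nd k (pdy g j) ?y' {\<beta> \<in> MI (Suc k). incr j \<beta> \<in> ?U})"
  have "X = psum_nd k g ?y ?U"
    unfolding X_def by (rule psum_nd_cong) (simp add: b_def)
  then have X: "ord_ge W X"
    using ord_ge_psum_nd_low_indices[OF Y, of R' g R'] root R' by (auto elim: ord_ge_mono)
  have S: "ord_ge (R + V) S"
    unfolding S_def
    by (intro ord_ge_sum ord_ge_mult b)
       (simp add: incr_in_low_indices_iff ord_ge_psum_nd_low_indices[OF Y'] deriv R')
  have T: "ord_ge (2 * R) (X - psum_nd k g ?y' ?U - S)"
    unfolding X_def S_def
    by (rule ord_ge_psum_nd_taylor[OF b R finite_low_indices[OF c]]) (auto simp: low_indices_def)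
  have "ord_ge W (X - S - (X - psum_nd k g ?y' ?U - S))"
    by (rule ord_ge_diff[OF ord_ge_diff[OF X ord_ge_mono[OF S W(2)]] ord_ge_mono[OF T W(1)]])
  then have "ord_ge W (psum_nd k g ?y' ?U)" by simp
  moreover have "ord_ge W (Abs_ndulac (dsubst k g Y') - psum_nd k g ?y' ?U)"
    using ord_ge_dsubst_minus_psum_nd[OF Y'] R'(1) by (rule ord_ge_mono)
  ultimately have "ord_ge W (Abs_ndulac (dsubst k g Y'))"
    using ord_ge_add by fastforce
  then show ?thesis by (simp add: ord_ge_Abs_ndulac nonneg_dulac_dsubst[OF Y'])
qed

section \<open>Absolute convergence\<close>

lemma nonneg_summable_on_bounded:
  fixes h :: "'a \<Rightarrow> real"
  assumes "\<And>x. x \<in> A \<Longrightarrow> 0 \<le> h x" "\<And>F. finite F \<Longrightarrow> F \<subseteq> A \<Longrightarrow> sum h F \<le> B"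
  shows "h summable_on A" "infsum h A \<le> B"
proof -
  show s: "h summable_on A"
    by (rule nonneg_bdd_above_summable_on) (use assms in \<open>auto intro!: bdd_aboveI2\<close>)
  show "infsum h A \<le> B" by (rule infsum_le_finite_sums[OF s]) (use assms in auto)
qed

definition abs_term :: "dulac \<Rightarrow> complex \<Rightarrow> complex \<Rightarrow> real" where
  "abs_term D t l = norm (poly (D l) t * exp (l * t))"

definition abs_summable_at :: "dulac \<Rightarrow> complex \<Rightarrow> bool" where
  "abs_summable_at D t \<longleftrightarrow> abs_term D t summable_on UNIV"

definition abs_sum :: "dulac \<Rightarrow> complex \<Rightarrow> real" where
  "abs_sum D t = infsum (abs_term D t) UNIV"

lemma abs_term_nonneg: "0 \<le> abs_term D t l" unfolding abs_term_def by simp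

lemma abs_sum_nonneg: "0 \<le> abs_sum D t" unfolding abs_sum_def
  by (simp add: infsum_nonneg abs_term_nonneg)

lemma sum_abs_term_le_abs_sum: "abs_summable_at D t \<Longrightarrow> finite F \<Longrightarrow> sum (abs_term D t) F \<le> abs_sum D t"
  unfolding abs_summable_at_def abs_sum_def
    by (rule finite_sum_le_infsum) (auto simp: abs_term_nonneg)

lemma abs_summable_at_bounded:
  assumes "\<And>F. finite F \<Longrightarrow> sum (abs_term D t) F \<le> B"
  shows "abs_summable_at D t" "abs_sum D t \<le> B"
  using nonneg_summable_on_bounded[of UNIV "abs_term D t" B] assms abs_term_nonneg
    unfolding abs_summable_at_def abs_sum_def by auto

lemma abs_summable_at_finite_support:
  assumes "finite {l. D l \<noteq> 0}"
  shows "abs_summable_at D t" "abs_sum D t \<le> sum (abs_term D t) {l. D l \<noteq> 0}"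
proof -
  have "sum (abs_term D t) F \<le> sum (abs_term D t) {l. D l \<noteq> 0}" if "finite F" for F
  proof -
    have "sum (abs_term D t) F = sum (abs_term D t) (F \<inter> {l. D l \<noteq> 0})"
      by (rule sum.mono_neutral_right) (use that in \<open>auto simp: abs_term_def\<close>)
    also have "\<dots> \<le> sum (abs_term D t) {l. D l \<noteq> 0}"
      by (rule sum_mono2[OF assms]) (auto simp: abs_term_nonneg)
    finally show ?thesis .
  qed
  then show "abs_summable_at D t" "abs_sum D t \<le> sum (abs_term D t) {l. D l \<noteq> 0}"
    using abs_summable_at_bounded by blast+
qed

lemma abs_term_dmul_le:
  "abs_term (dmul D E) t s
    \<le> (\<Sum>a | D a \<noteq> 0 \<and> E (s - a) \<noteq> 0. abs_term D t a * abs_term E t (s - a))"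
proof -
  have "norm (poly (D a * E (s - a)) t * exp (s * t))
      = norm (poly (D a) t * exp (a * t)) * norm (poly (E (s - a)) t * exp ((s - a) * t))" for a
  proof -
    have "exp (s * t) = exp (a * t) * exp ((s - a) * t)"
      by (simp add: exp_add[symmetric] algebra_simps)
    then show ?thesis by (simp only: poly_mult norm_mult ac_simps)
  qed
  then show ?thesis
    unfolding abs_term_def dmul_def poly_sum sum_distrib_right
    by (intro order_trans[OF norm_sum] eq_refl sum.cong) simp_all
qed

lemma abs_summable_at_dmul:
  assumes D: "nonneg_dulac D" and E: "nonneg_dulac E" and oD: "abs_summable_at D t"
    and oE: "abs_summable_at E t"
  shows "abs_summable_at (dmul D E) t" "abs_sum (dmul D E) t \<le> abs_sum D t * abs_sum E t"
proof -
  define I where "I s = {a. D a \<noteq> 0 \<and> E (s - a) \<noteq> 0}" for s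
  have finI: "finite (I s)" for s
    unfolding I_def
    by (rule finite_subset[OF dmul_support_subset])
      (use D E dulac_finite_le in \<open>auto simp: nonneg_dulac_def\<close>)
  have "sum (abs_term (dmul D E) t) F \<le> abs_sum D t * abs_sum E t" if F: "finite F" for F
  proof -
    let ?GA = "\<Union>s\<in>F. I s"
    let ?GB = "(\<lambda>(s, a). s - a) ` (SIGMA s:F. I s)"
    have fA: "finite ?GA" using F finI by auto
    have fB: "finite ?GB" using F finI by auto
    have "sum (abs_term (dmul D E) t) F \<le> (\<Sum>s\<in>F. \<Sum>a\<in>I s. abs_term D t a * abs_term E t (s - a))"
      unfolding I_def by (rule sum_mono) (rule abs_term_dmul_le)
    also have "\<dots> = (\<Sum>(s, a)\<in>(SIGMA s:F. I s). abs_term D t a * abs_term E t (s - a))"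
      by (rule sum.Sigma) (use F finI in auto)
    also have "\<dots> =
      (\<Sum>(a, b)\<in>(\<lambda>(s, a). (a, s - a)) ` (SIGMA s:F. I s). abs_term D t a * abs_term E t b)"
      by (subst sum.reindex) (auto simp: inj_on_def case_prod_beta)
    also have "\<dots> \<le> (\<Sum>(a, b)\<in>?GA \<times> ?GB. abs_term D t a * abs_term E t b)"
      by (rule sum_mono2) (use fA fB in \<open>auto simp: abs_term_nonneg intro!: mult_nonneg_nonneg\<close>)
    also have "\<dots> = sum (abs_term D t) ?GA * sum (abs_term E t) ?GB"
      by (simp add: sum_product sum.cartesian_product)
    also have "\<dots> \<le> abs_sum D t * abs_sum E t"
    proof -
      have "0 \<le> sum (abs_term E t) ?GB" by (rule sum_nonneg) (rule abs_term_nonneg)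
      then show ?thesis
        by (rule mult_mono[OF sum_abs_term_le_abs_sum[OF oD fA] sum_abs_term_le_abs_sum[OF oE fB]
        abs_sum_nonneg])
    qed
    finally show ?thesis .
  qed
  then show "abs_summable_at (dmul D E) t" "abs_sum (dmul D E) t \<le> abs_sum D t * abs_sum E t"
    using abs_summable_at_bounded by blast+
qed

lemma abs_summable_at_dmon:
  "abs_summable_at (dmon a p) t" "abs_sum (dmon a p) t \<le> norm (poly p t * exp (a * t))"
proof -
  have f: "finite {l. dmon a p l \<noteq> 0}" by (rule finite_subset[of _ "{a}"]) (auto simp: dmon_def)
  show "abs_summable_at (dmon a p) t" by (rule abs_summable_at_finite_support[OF f])
  have "sum (abs_term (dmon a p) t) {l. dmon a p l \<noteq> 0} \<le> norm (poly p t * exp (a * t))"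
  proof (cases "p = 0")
    case True then show ?thesis by (simp add: dmon_def)
  next
    case False
    then have "{l. dmon a p l \<noteq> 0} = {a}" by (auto simp: dmon_def)
    then show ?thesis by (simp add: abs_term_def dmon_def)
  qed
  then show "abs_sum (dmon a p) t \<le> norm (poly p t * exp (a * t))"
    using abs_summable_at_finite_support(2)[OF f, where t=t] by linarith
qed

lemma abs_summable_at_dpow:
  assumes "nonneg_dulac D" "abs_summable_at D t"
  shows "abs_summable_at (dpow D k) t \<and> abs_sum (dpow D k) t \<le> abs_sum D t ^ k"
proof (induction k)
  case 0
  then show ?case using abs_summable_at_dmon[of 0 1 t] by simp
next
  case (Suc k)
  have n: "nonneg_dulac (dpow D k)" using nonneg_dulac_dpow[OF assms(1)] .
  have "abs_summable_at (dmul D (dpow D k)) t"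
    "abs_sum (dmul D (dpow D k)) t \<le> abs_sum D t * abs_sum (dpow D k) t"
    using abs_summable_at_dmul[OF assms(1) n assms(2)] Suc.IH by auto
  moreover have "abs_sum D t * abs_sum (dpow D k) t \<le> abs_sum D t * abs_sum D t ^ k"
    by (rule mult_left_mono) (use Suc.IH abs_sum_nonneg in auto)
  ultimately show ?case by simp
qed

lemma abs_summable_at_dprodn:
  assumes "\<And>j. j < k \<Longrightarrow> nonneg_dulac (G j) \<and> abs_summable_at (G j) t"
  shows "abs_summable_at (dprodn k G) t \<and> abs_sum (dprodn k G) t \<le> (\<Prod>j<k. abs_sum (G j) t)"
  using assms
proof (induction k)
  case 0
  then show ?case using abs_summable_at_dmon[of 0 1 t] by simp
next
  case (Suc k)
  have IH: "abs_summable_at (dprodn k G) t \<and> abs_sum (dprodn k G) t \<le> (\<Prod>j<k. abs_sum (G j) t)"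
    using Suc by auto
  have n: "nonneg_dulac (dprodn k G)" by (rule nonneg_dulac_dprodn) (use Suc.prems in auto)
  have g: "nonneg_dulac (G k)" "abs_summable_at (G k) t" using Suc.prems by auto
  have "abs_summable_at (dmul (dprodn k G) (G k)) t"
    "abs_sum (dmul (dprodn k G) (G k)) t \<le> abs_sum (dprodn k G) t * abs_sum (G k) t"
    using abs_summable_at_dmul[OF n g(1) _ g(2)] IH by auto
  moreover have
    "abs_sum (dprodn k G) t * abs_sum (G k) t \<le> (\<Prod>j<k. abs_sum (G j) t) * abs_sum (G k) t"
    by (rule mult_right_mono) (use IH abs_sum_nonneg in auto)
  ultimately show ?case by simp
qed

lemma msize_Suc: "msize (Suc k) \<alpha> = \<alpha> 0 + (\<Sum>j<k. \<alpha> (Suc j))"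
  unfolding msize_def by (rule sum.lessThan_Suc_shift)

lemma abs_summable_at_dterm:
  assumes Y: "\<And>j. j < k \<Longrightarrow> nonneg_dulac (Y j)" "\<And>j. j < k \<Longrightarrow> abs_summable_at (Y j) t"
      "\<And>j. j < k \<Longrightarrow> abs_sum (Y j) t \<le> \<rho>"
    and et: "norm (exp t) \<le> \<rho>"
  shows "abs_summable_at (dterm k Y \<alpha>) t" "abs_sum (dterm k Y \<alpha>) t \<le> \<rho> ^ msize (Suc k) \<alpha>"
proof -
  let ?P = "dprodn k (\<lambda>j. dpow (Y j) (\<alpha> (Suc j)))"
  have \<rho>: "0 \<le> \<rho>" using et norm_ge_zero order_trans by blast
  have pn: "nonneg_dulac ?P" by (rule nonneg_dulac_dprodn) (use Y nonneg_dulac_dpow in auto)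
  have po: "abs_summable_at ?P t \<and> abs_sum ?P t \<le> (\<Prod>j<k. abs_sum (dpow (Y j) (\<alpha> (Suc j))) t)"
    by (rule abs_summable_at_dprodn) (use Y nonneg_dulac_dpow abs_summable_at_dpow in blast)
  have "(\<Prod>j<k. abs_sum (dpow (Y j) (\<alpha> (Suc j))) t) \<le> (\<Prod>j<k. \<rho> ^ \<alpha> (Suc j))"
    by (rule prod_mono)
       (use Y abs_summable_at_dpow abs_sum_nonneg in \<open>blast intro: order_trans power_mono\<close>)
  with po have P: "abs_sum ?P t \<le> (\<Prod>j<k. \<rho> ^ \<alpha> (Suc j))" by linarith
  have mn: "nonneg_dulac (dmon (of_nat (\<alpha> 0)) 1)" by (rule nonneg_dulac_dmon) simp
  have m: "abs_summable_at (dterm k Y \<alpha>) t"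
    "abs_sum (dterm k Y \<alpha>) t \<le> abs_sum (dmon (of_nat (\<alpha> 0)) 1) t * abs_sum ?P t"
    unfolding dterm_def using abs_summable_at_dmul[OF mn pn abs_summable_at_dmon(1)] po by auto
  then show "abs_summable_at (dterm k Y \<alpha>) t" by simp
  have "abs_sum (dmon (of_nat (\<alpha> 0)) 1) t \<le> \<rho> ^ \<alpha> 0"
    using abs_summable_at_dmon(2)[of "of_nat (\<alpha> 0)" 1 t] power_mono[OF et, of "\<alpha> 0"]
    by (simp add: exp_of_nat_mult norm_power)
  then have "abs_sum (dmon (of_nat (\<alpha> 0)) 1) t * abs_sum ?P t \<le> \<rho> ^ \<alpha> 0 * (\<Prod>j<k. \<rho> ^ \<alpha> (Suc j))"
    by (rule mult_mono[OF _ P]) (use \<rho> abs_sum_nonneg in auto)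
  also have "\<dots> = \<rho> ^ msize (Suc k) \<alpha>" by (simp add: msize_Suc power_add power_sum)
  finally show "abs_sum (dterm k Y \<alpha>) t \<le> \<rho> ^ msize (Suc k) \<alpha>" using m(2) by linarith
qed

lemma abs_term_dsubst_le:
  "abs_term (dsubst k g Y) t s
    \<le> (\<Sum>\<alpha> | \<alpha> \<in> MI (Suc k) \<and> g \<alpha> \<noteq> 0 \<and> dterm k Y \<alpha> s \<noteq> 0. norm (g \<alpha>) * abs_term (dterm k Y \<alpha>) t s)"
  unfolding abs_term_def dsubst_def poly_sum sum_distrib_right
  by (rule order_trans[OF norm_sum]) (simp add: norm_mult mult.assoc)

lemma abs_summable_at_dsubst:
  assumes Y: "substitutable k c Y"
    and Yt: "\<And>j. j < k \<Longrightarrow> abs_summable_at (Y j) t" "\<And>j. j < k \<Longrightarrow> abs_sum (Y j) t \<le> \<rho>"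
    and et: "norm (exp t) \<le> \<rho>"
    and g: "(\<lambda>\<alpha>. norm (g \<alpha>) * \<rho> ^ msize (Suc k) \<alpha>) summable_on MI (Suc k)"
  shows "abs_summable_at (dsubst k g Y) t"
    "abs_sum (dsubst k g Y) t \<le> (\<Sum>\<^sub>\<infinity>\<alpha>\<in>MI (Suc k). norm (g \<alpha>) * \<rho> ^ msize (Suc k) \<alpha>)"
proof -
  have \<rho>: "0 \<le> \<rho>" using et norm_ge_zero order_trans by blast
  have Ynn: "\<And>j. j < k \<Longrightarrow> nonneg_dulac (Y j)" using substitutableD(2)[OF Y] .
  define A where "A s = {\<alpha>. \<alpha> \<in> MI (Suc k) \<and> g \<alpha> \<noteq> 0 \<and> dterm k Y \<alpha> s \<noteq> 0}" for s
  have "A s \<subseteq> low_indices k c (Re s + 1)" for s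
    unfolding A_def low_indices_def using dterm_neq_zero_mweight[OF Y] by fastforce
  then have finA: "finite (A s)" for s
    using finite_low_indices[OF substitutableD(1)[OF Y]] finite_subset by blast
  have "sum (abs_term (dsubst k g Y) t) F \<le> (\<Sum>\<^sub>\<infinity>\<alpha>\<in>MI (Suc k). norm (g \<alpha>) * \<rho> ^ msize (Suc k) \<alpha>)"
    if F: "finite F" for F
  proof -
    let ?G = "\<Union>s\<in>F. A s"
    have fG: "finite ?G" using F finA by auto
    have "sum (abs_term (dsubst k g Y) t) F \<le>
      (\<Sum>s\<in>F. \<Sum>\<alpha>\<in>A s. norm (g \<alpha>) * abs_term (dterm k Y \<alpha>) t s)"
      unfolding A_def by (rule sum_mono) (rule abs_term_dsubst_le)
    also have "\<dots> \<le> (\<Sum>s\<in>F. \<Sum>\<alpha>\<in>?G. norm (g \<alpha>) * abs_term (dterm k Y \<alpha>) t s)"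
      by (rule sum_mono, rule sum_mono2) (use fG F in \<open>auto simp: abs_term_nonneg\<close>)
    also have "\<dots> = (\<Sum>\<alpha>\<in>?G. norm (g \<alpha>) * sum (abs_term (dterm k Y \<alpha>) t) F)"
      by (subst sum.swap) (simp add: sum_distrib_left)
    also have "\<dots> \<le> (\<Sum>\<alpha>\<in>?G. norm (g \<alpha>) * \<rho> ^ msize (Suc k) \<alpha>)"
      using sum_abs_term_le_abs_sum[OF abs_summable_at_dterm(1)[where k=k and Y=Y, OF Ynn Yt et] F]
        abs_summable_at_dterm(2)[where k=k and Y=Y, OF Ynn Yt et]
      by (intro sum_mono mult_left_mono) (auto intro: order_trans)
    also have "\<dots> \<le> (\<Sum>\<^sub>\<infinity>\<alpha>\<in>MI (Suc k). norm (g \<alpha>) * \<rho> ^ msize (Suc k) \<alpha>)"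
      by (rule finite_sum_le_infsum[OF g fG]) (use \<rho> in \<open>auto simp: A_def\<close>)
    finally show ?thesis .
  qed
  then show "abs_summable_at (dsubst k g Y) t"
    "abs_sum (dsubst k g Y) t \<le> (\<Sum>\<^sub>\<infinity>\<alpha>\<in>MI (Suc k). norm (g \<alpha>) * \<rho> ^ msize (Suc k) \<alpha>)"
    using abs_summable_at_bounded by blast+
qed

lemma abs_summable_at_dshift:
  assumes "abs_summable_at D t"
  shows "abs_summable_at (dshift a D) t" "abs_sum (dshift a D) t = norm (exp (a * t)) * abs_sum D t"
proof -
  have eq: "abs_term (dshift a D) t l = abs_term D t (l - a) * norm (exp (a * t))" for l
  proof -
    have "exp (l * t) = exp ((l - a) * t) * exp (a * t)"
      by (simp add: exp_add[symmetric] algebra_simps)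
    then show ?thesis unfolding abs_term_def dshift_def by (simp add: norm_mult)
  qed
  have bij: "bij_betw (\<lambda>l. l - a) UNIV UNIV"
    by (rule bij_betwI[where g="\<lambda>l. l + a"]) auto
  have s1: "(\<lambda>l. abs_term D t (l - a)) summable_on UNIV"
    using summable_on_reindex_bij_betw[OF bij, of "abs_term D t"] assms
      unfolding abs_summable_at_def by simp
  have i1: "infsum (\<lambda>l. abs_term D t (l - a)) UNIV = abs_sum D t"
    using infsum_reindex_bij_betw[OF bij, of "abs_term D t"] unfolding abs_sum_def by simp
  show "abs_summable_at (dshift a D) t" unfolding abs_summable_at_def eq
    by (rule summable_on_cmult_left[OF s1])
  show "abs_sum (dshift a D) t = norm (exp (a * t)) * abs_sum D t"
    unfolding abs_sum_def eq infsum_cmult_left[OF s1] using i1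
      by (simp add: abs_sum_def mult.commute)
qed

lemma norm_deval_le_abs_sum: "abs_summable_at D t \<Longrightarrow> norm (deval D t) \<le> abs_sum D t"
  unfolding deval_def abs_sum_def abs_summable_at_def abs_term_def by (rule norm_infsum_bound)

lemma summable_on_of_abs_summable_at:
  "abs_summable_at D t \<Longrightarrow> (\<lambda>l. poly (D l) t * exp (l * t)) summable_on UNIV"
  unfolding abs_summable_at_def abs_term_def by (rule abs_summable_summable)

lemma sum_power_le_geometric:
  fixes x :: real
  assumes "0 \<le> x" "x < 1" "finite V"
  shows "(\<Sum>v\<in>V. x ^ v) \<le> 1 / (1 - x)"
proof -
  obtain N where N: "V \<subseteq> {..<N}"
    using assms(3) by (meson finite_nat_iff_bounded subset_eq lessThan_iff)
  have "(\<Sum>v\<in>V. x ^ v) \<le> (\<Sum>v<N. x ^ v)"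
    by (rule sum_mono2[OF _ N]) (use assms in auto)
  also have "\<dots> = (1 - x ^ N) / (1 - x)" using assms by (simp add: sum_gp_strict)
  also have "\<dots> \<le> 1 / (1 - x)" using assms by (simp add: divide_right_mono)
  finally show ?thesis .
qed

lemma msize_Suc_fun_upd: "msize (Suc m) (p(m := v)) = msize m p + v"
  unfolding msize_def by simp

lemma fun_upd_zero_in_MI: "q \<in> MI (Suc m) \<Longrightarrow> q(m := 0) \<in> MI m"
  unfolding MI_def by auto

lemma sum_power_msize_le:
  fixes x :: real
  assumes x: "0 \<le> x" "x < 1"
  shows "finite Q \<Longrightarrow> Q \<subseteq> MI m \<Longrightarrow> (\<Sum>q\<in>Q. x ^ msize m q) \<le> (1 / (1 - x)) ^ m"
proof (induction m arbitrary: Q)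
  case 0
  have "Q \<subseteq> {\<lambda>_. 0}" using 0 unfolding MI_def by auto
  then have "card Q \<le> 1" using card_mono[of "{\<lambda>_. 0}" Q] by auto
  then show ?case by (simp add: msize_def)
next
  case (Suc m)
  let ?P = "(\<lambda>q. q(m := 0)) ` Q" and ?V = "(\<lambda>q. q m) ` Q"
  have fin: "finite (?P \<times> ?V)" using Suc.prems(1) by simp
  have "Q \<subseteq> (\<lambda>(p, v). p(m := v)) ` (?P \<times> ?V)"
    by (auto intro!: image_eqI[where x="(_(m := 0), _ m)"])
  then have "(\<Sum>q\<in>Q. x ^ msize (Suc m) q) \<le>
    (\<Sum>q\<in>(\<lambda>(p, v). p(m := v)) ` (?P \<times> ?V). x ^ msize (Suc m) q)"
    by (rule sum_mono2[OF finite_imageI[OF fin]]) (use x in auto)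
  also have "\<dots> \<le> (\<Sum>(p, v)\<in>?P \<times> ?V. x ^ msize m p * x ^ v)"
    using sum_image_le[OF fin, of "\<lambda>q. x ^ msize (Suc m) q" "\<lambda>(p, v). p(m := v)"] x
    by (simp add: case_prod_unfold msize_Suc_fun_upd power_add comp_def)
  also have "\<dots> = (\<Sum>p\<in>?P. x ^ msize m p) * (\<Sum>v\<in>?V. x ^ v)"
    by (simp add: sum_product sum.cartesian_product)
  also have "\<dots> \<le> (1 / (1 - x)) ^ m * (1 / (1 - x))"
    using Suc.prems fun_upd_zero_in_MI x
    by (intro mult_mono Suc.IH sum_power_le_geometric sum_nonneg) auto
  finally show ?case by (simp add: mult.commute)
qed

lemma summable_on_power_msize:
  fixes x :: real
  assumes "0 \<le> x" "x < 1"
  shows "(\<lambda>q. x ^ msize m q) summable_on MI m"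
  by (rule nonneg_summable_on_bounded(1)[where B="(1 / (1 - x)) ^ m"])
    (use assms sum_power_msize_le in auto)

definition taylor_shift :: "(nat \<Rightarrow> nat) \<Rightarrow> (nat \<Rightarrow> nat) \<Rightarrow> (nat \<Rightarrow> nat)" where
  "taylor_shift q \<alpha> = (\<lambda>i. if i = 0 then \<alpha> 0 else \<alpha> i + q (i - 1))"

lemma taylor_shift_inj: "inj_on (taylor_shift q) A"
proof
  fix a b assume "taylor_shift q a = taylor_shift q b"
  then have "\<forall>i. taylor_shift q a i = taylor_shift q b i" by simp
  show "a = b"
  proof
    fix i
    have "taylor_shift q a i = taylor_shift q b i"
      using \<open>\<forall>i. taylor_shift q a i = taylor_shift q b i\<close> by blast
    then show "a i = b i" unfolding taylor_shift_def by (cases "i = 0") auto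
  qed
qed

lemma taylor_shift_MI: "q \<in> MI k \<Longrightarrow> \<alpha> \<in> MI (Suc k) \<Longrightarrow> taylor_shift q \<alpha> \<in> MI (Suc k)"
  unfolding MI_def taylor_shift_def by auto

lemma msize_taylor_shift: "msize (Suc k) (taylor_shift q \<alpha>) = msize (Suc k) \<alpha> + msize k q"
proof -
  have "msize (Suc k) (taylor_shift q \<alpha>) = \<alpha> 0 + (\<Sum>j<k. \<alpha> (Suc j) + q j)"
    unfolding msize_Suc by (simp add: taylor_shift_def)
  also have "\<dots> = msize (Suc k) \<alpha> + msize k q"
  proof -
    have "msize k q = (\<Sum>j<k. q j)" by (simp add: msize_def)
    then show ?thesis by (simp only: msize_Suc sum.distrib)
  qed
  finally show ?thesis .
qed

lemma norm_taylorc_le: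
  "norm (taylorc k f q \<alpha>) \<le> 2 ^ (msize (Suc k) \<alpha> + msize k q) * norm (f (taylor_shift q \<alpha>))"
proof -
  have "(\<Prod>j<k. (\<alpha> (Suc j) + q j) choose (q j)) \<le> (\<Prod>j<k. 2 ^ (\<alpha> (Suc j) + q j))"
    by (rule prod_mono) (auto simp: binomial_le_pow2)
  also have "\<dots> = 2 ^ (\<Sum>j<k. \<alpha> (Suc j) + q j)" by (simp add: power_sum)
  also have "\<dots> \<le> 2 ^ (msize (Suc k) \<alpha> + msize k q)"
  proof (rule power_increasing)
    have "msize k q = (\<Sum>j<k. q j)" by (simp add: msize_def)
    then show "(\<Sum>j<k. \<alpha> (Suc j) + q j) \<le> msize (Suc k) \<alpha> + msize k q"
      by (simp only: msize_Suc sum.distrib)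
  qed simp
  finally have b: "real (\<Prod>j<k. (\<alpha> (Suc j) + q j) choose (q j)) \<le> 2 ^ (msize (Suc k) \<alpha> + msize k q)"
    by (metis of_nat_le_iff of_nat_numeral of_nat_power)
  have "norm (taylorc k f q \<alpha>)
      = real (\<Prod>j<k. (\<alpha> (Suc j) + q j) choose (q j)) * norm (f (taylor_shift q \<alpha>))"
    unfolding taylorc_def taylor_shift_def norm_mult norm_of_nat ..
  also have "\<dots> \<le> 2 ^ (msize (Suc k) \<alpha> + msize k q) * norm (f (taylor_shift q \<alpha>))"
    by (rule mult_right_mono[OF b]) simp
  finally show ?thesis .
qed

lemma norm_taylorc_power_le:
  assumes R: "0 < R" and s: "0 \<le> s" "2 * s \<le> R"
  shows "norm (taylorc k f q \<alpha>) * s ^ msize (Suc k) \<alpha>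
      \<le> (2 / R) ^ msize k q * (norm (f (taylor_shift q \<alpha>)) * R ^ msize (Suc k) (taylor_shift q \<alpha>))"
proof -
  have "norm (taylorc k f q \<alpha>) * s ^ msize (Suc k) \<alpha>
      \<le> 2 ^ (msize (Suc k) \<alpha> + msize k q) * norm (f (taylor_shift q \<alpha>)) * s ^ msize (Suc k) \<alpha>"
    by (rule mult_right_mono[OF norm_taylorc_le]) (use s in simp)
  also have "\<dots> = 2 ^ msize k q * norm (f (taylor_shift q \<alpha>)) * (2 * s) ^ msize (Suc k) \<alpha>"
    by (simp only: power_add power_mult_distrib ac_simps)
  also have "\<dots> \<le> 2 ^ msize k q * norm (f (taylor_shift q \<alpha>)) * R ^ msize (Suc k) \<alpha>"
    by (rule mult_left_mono, rule power_mono) (use s in auto)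
  also have "\<dots> = (2 / R) ^ msize k q *
    (norm (f (taylor_shift q \<alpha>)) * R ^ msize (Suc k) (taylor_shift q \<alpha>))"
  proof -
    have e: "(2 / R) ^ msize k q * R ^ msize k q = 2 ^ msize k q"
      using R by (simp add: power_divide)
    show ?thesis unfolding msize_taylor_shift power_add by (simp only: e[symmetric] ac_simps)
  qed
  finally show ?thesis .
qed

lemma taylorc_summable:
  assumes f: "(\<lambda>\<beta>. norm (f \<beta>) * R ^ msize (Suc k) \<beta>) summable_on MI (Suc k)"
    and R: "0 < R" and s: "0 \<le> s" "2 * s \<le> R" and q: "q \<in> MI k"
  shows "(\<lambda>\<alpha>. norm (taylorc k f q \<alpha>) * s ^ msize (Suc k) \<alpha>) summable_on MI (Suc k)"
    "(\<Sum>\<^sub>\<infinity>\<alpha>\<in>MI (Suc k). norm (taylorc k f q \<alpha>) * s ^ msize (Suc k) \<alpha>)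
       \<le> (2 / R) ^ msize k q * (\<Sum>\<^sub>\<infinity>\<beta>\<in>MI (Suc k). norm (f \<beta>) * R ^ msize (Suc k) \<beta>)"
proof -
  have "(\<Sum>\<alpha>\<in>G. norm (taylorc k f q \<alpha>) * s ^ msize (Suc k) \<alpha>)
      \<le> (2 / R) ^ msize k q * (\<Sum>\<^sub>\<infinity>\<beta>\<in>MI (Suc k). norm (f \<beta>) * R ^ msize (Suc k) \<beta>)"
    if G: "finite G" "G \<subseteq> MI (Suc k)" for G
  proof -
    have "(\<Sum>\<alpha>\<in>G. norm (taylorc k f q \<alpha>) * s ^ msize (Suc k) \<alpha>)
        \<le> (\<Sum>\<alpha>\<in>G. (2 / R) ^ msize k q *
          (norm (f (taylor_shift q \<alpha>)) * R ^ msize (Suc k) (taylor_shift q \<alpha>)))"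
      by (rule sum_mono) (rule norm_taylorc_power_le[OF R s])
    also have "\<dots> = (2 / R) ^ msize k q * (\<Sum>\<beta>\<in>taylor_shift q ` G. norm (f \<beta>) * R ^ msize (Suc k) \<beta>)"
      by (simp add: sum_distrib_left sum.reindex[OF taylor_shift_inj])
    also have "\<dots> \<le> (2 / R) ^ msize k q * (\<Sum>\<^sub>\<infinity>\<beta>\<in>MI (Suc k). norm (f \<beta>) * R ^ msize (Suc k) \<beta>)"
      by (rule mult_left_mono, rule finite_sum_le_infsum[OF f])
        (use G taylor_shift_MI[OF q] R in auto)
    finally show ?thesis .
  qed
  then show "(\<lambda>\<alpha>. norm (taylorc k f q \<alpha>) * s ^ msize (Suc k) \<alpha>) summable_on MI (Suc k)"
    "(\<Sum>\<^sub>\<infinity>\<alpha>\<in>MI (Suc k). norm (taylorc k f q \<alpha>) * s ^ msize (Suc k) \<alpha>)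
       \<le> (2 / R) ^ msize k q * (\<Sum>\<^sub>\<infinity>\<beta>\<in>MI (Suc k). norm (f \<beta>) * R ^ msize (Suc k) \<beta>)"
    using nonneg_summable_on_bounded[of "MI (Suc k)"
      "\<lambda>\<alpha>. norm (taylorc k f q \<alpha>) * s ^ msize (Suc k) \<alpha>"] s
    by auto
qed

lemma norm_poly_le: fixes p :: "complex poly"
  shows "norm (poly p t) \<le> (\<Sum>i\<le>degree p. norm (coeff p i)) * (1 + norm t) ^ degree p"
proof -
  have "norm (poly p t) \<le> (\<Sum>i\<le>degree p. norm (coeff p i) * norm t ^ i)"
    unfolding poly_altdef
      by (rule order_trans[OF norm_sum]) (simp add: norm_mult norm_power del: of_nat_Suc)
  also have "\<dots> \<le> (\<Sum>i\<le>degree p. norm (coeff p i) * (1 + norm t) ^ degree p)"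
  proof (rule sum_mono, rule mult_left_mono)
    fix i assume "i \<in> {..degree p}"
    have "norm t ^ i \<le> (1 + norm t) ^ i" by (rule power_mono) auto
    also have "\<dots> \<le> (1 + norm t) ^ degree p"
      by (rule power_increasing) (use \<open>i \<in> {..degree p}\<close> in auto)
    finally show "norm t ^ i \<le> (1 + norm t) ^ degree p" .
  qed simp
  also have "\<dots> = (\<Sum>i\<le>degree p. norm (coeff p i)) * (1 + norm t) ^ degree p"
    by (simp add: sum_distrib_right)
  finally show ?thesis .
qed

lemma tendsto_power_mult_exp_neg:
  fixes c :: real
  assumes c: "0 < c"
  shows "((\<lambda>u. (2 + u) ^ d * exp (- (c * u))) \<longlongrightarrow> 0) at_top"
proof -
  have lim: "filterlim (\<lambda>u::real. c * (2 + u)) at_top at_top"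
    by (rule filterlim_tendsto_pos_mult_at_top[OF tendsto_const c])
       (rule filterlim_tendsto_add_at_top[OF tendsto_const filterlim_ident])
  have "((\<lambda>u. (c * (2 + u)) ^ d / exp (c * (2 + u))) \<longlongrightarrow> 0) at_top"
    by (rule filterlim_compose[OF tendsto_power_div_exp_0 lim])
  then have "((\<lambda>u. exp (2 * c) / c ^ d * ((c * (2 + u)) ^ d / exp (c * (2 + u))))
      \<longlongrightarrow> exp (2 * c) / c ^ d * 0) at_top"
    by (rule tendsto_mult_left)
  moreover have "exp (2 * c) / c ^ d * ((c * (2 + u)) ^ d / exp (c * (2 + u)))
      = (2 + u) ^ d * exp (- (c * u))" for u
  proof -
    have e1: "exp (c * (2 + u)) = exp (2 * c) * exp (c * u)"
      by (simp add: exp_add[symmetric] algebra_simps)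
    have e2: "(c * (2 + u)) ^ d = c ^ d * (2 + u) ^ d" by (rule power_mult_distrib)
    show ?thesis unfolding e1 e2 using c by (simp add: exp_minus field_simps)
  qed
  ultimately show ?thesis by simp
qed

lemma norm_poly_exp_le_on_strip:
  fixes c :: real
  assumes c: "c \<le> Re l" and t: "Re t \<le> 0" "\<bar>Im t\<bar> \<le> 1"
  shows "norm (poly p t * exp (l * t))
    \<le> (\<Sum>i\<le>degree p. norm (coeff p i)) * exp (norm l) * ((2 - Re t) ^ degree p * exp (c * Re t))"
proof -
  define A where "A = (\<Sum>i\<le>degree p. norm (coeff p i))"
  have A0: "0 \<le> A" unfolding A_def by (simp add: sum_nonneg)
  have "norm t \<le> \<bar>Re t\<bar> + \<bar>Im t\<bar>" by (rule cmod_le)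
  then have "1 + norm t \<le> 2 - Re t" using t by auto
  have "norm (poly p t) \<le> A * (1 + norm t) ^ degree p" unfolding A_def by (rule norm_poly_le)
  also have "\<dots> \<le> A * (2 - Re t) ^ degree p"
    by (rule mult_left_mono[OF power_mono]) (use \<open>1 + norm t \<le> 2 - Re t\<close> A0 in auto)
  finally have p: "norm (poly p t) \<le> A * (2 - Re t) ^ degree p" .
  have "- (Im l * Im t) \<le> \<bar>Im l\<bar> * \<bar>Im t\<bar>" by (simp add: abs_mult[symmetric])
  also have "\<dots> \<le> norm l"
    using mult_left_mono[OF t(2), of "\<bar>Im l\<bar>"] abs_Im_le_cmod[of l] by simp
  finally have "- (Im l * Im t) \<le> norm l" .
  moreover have "Re l * Re t \<le> c * Re t" using mult_right_mono_neg[OF c t(1)] .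
  ultimately have "norm (exp (l * t)) \<le> exp (norm l + c * Re t)" by simp
  then have "norm (exp (l * t)) \<le> exp (norm l) * exp (c * Re t)" by (simp add: exp_add)
  then have "norm (poly p t) * norm (exp (l * t))
      \<le> A * (2 - Re t) ^ degree p * (exp (norm l) * exp (c * Re t))"
    by (rule mult_mono[OF p]) (use A0 t in auto)
  then show ?thesis unfolding norm_mult A_def[symmetric] by (simp add: ac_simps)
qed

lemma eventually_norm_term_le_on_strip:
  fixes c :: real
  assumes c: "0 < c" "c \<le> Re l" and e: "0 < \<epsilon>"
  shows "eventually (\<lambda>U. \<forall>t. Re t \<le> - U \<and> \<bar>Im t\<bar> \<le> 1 \<longrightarrow> norm (poly p t * exp (l * t)) \<le> \<epsilon>) at_top"
proof -
  define K where "K = (\<Sum>i\<le>degree p. norm (coeff p i)) * exp (norm l)"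
  have K0: "0 \<le> K" unfolding K_def by (simp add: sum_nonneg)
  have "eventually (\<lambda>u. (2 + u) ^ degree p * exp (- (c * u)) < \<epsilon> / (K + 1)) at_top"
    by (rule order_tendstoD(2)[OF tendsto_power_mult_exp_neg[OF c(1)]]) (use e K0 in simp)
  then obtain N where N: "\<And>u. u \<ge> N \<Longrightarrow> (2 + u) ^ degree p * exp (- (c * u)) < \<epsilon> / (K + 1)"
    unfolding eventually_at_top_linorder by blast
  show ?thesis unfolding eventually_at_top_linorder
  proof (intro exI[of _ "max N 0"] allI impI)
    fix U t assume U: "U \<ge> max N 0" and t: "Re t \<le> - U \<and> \<bar>Im t\<bar> \<le> 1"
    then have "N \<le> - Re t" "Re t \<le> 0" by auto
    have "norm (poly p t * exp (l * t)) \<le> K * ((2 - Re t) ^ degree p * exp (c * Re t))"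
      unfolding K_def using norm_poly_exp_le_on_strip[OF c(2)] \<open>Re t \<le> 0\<close> t by simp
    also have "\<dots> \<le> K * (\<epsilon> / (K + 1))"
      using N[OF \<open>N \<le> - Re t\<close>] K0 by (intro mult_left_mono) auto
    also have "\<dots> \<le> \<epsilon>" using K0 e by (simp add: field_simps)
    finally show "norm (poly p t * exp (l * t)) \<le> \<epsilon>" .
  qed
qed

lemma eventually_abs_sum_le_on_strip:
  fixes c :: real
  assumes fin: "finite {l. D l \<noteq> 0}" and sup: "\<And>l. D l \<noteq> 0 \<Longrightarrow> c \<le> Re l" and c: "0 < c" and e: "0 < \<epsilon>"
  shows "eventually (\<lambda>U. \<forall>t. Re t \<le> - U \<and> \<bar>Im t\<bar> \<le> 1 \<longrightarrow> abs_sum D t \<le> \<epsilon>) at_top"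
proof -
  let ?Sp = "{l. D l \<noteq> 0}"
  define e' where "e' = \<epsilon> / (real (card ?Sp) + 1)"
  have e': "0 < e'" unfolding e'_def using e by simp
  have "eventually
    (\<lambda>U. \<forall>l\<in>?Sp. \<forall>t. Re t \<le> - U \<and> \<bar>Im t\<bar> \<le> 1 \<longrightarrow> norm (poly (D l) t * exp (l * t)) \<le> e') at_top"
    by (rule eventually_ball_finite[OF fin])
      (use eventually_norm_term_le_on_strip[OF c _ e'] sup in blast)
  then show ?thesis
  proof (rule eventually_mono)
    fix U assume a: "\<forall>l\<in>?Sp. \<forall>t. Re t \<le> - U \<and> \<bar>Im t\<bar> \<le> 1 \<longrightarrow> norm (poly (D l) t * exp (l * t)) \<le> e'"
    show "\<forall>t. Re t \<le> - U \<and> \<bar>Im t\<bar> \<le> 1 \<longrightarrow> abs_sum D t \<le> \<epsilon>"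
    proof (intro allI impI)
      fix t assume t: "Re t \<le> - U \<and> \<bar>Im t\<bar> \<le> 1"
      have "abs_sum D t \<le> sum (abs_term D t) ?Sp"
        by (rule abs_summable_at_finite_support(2)[OF fin])
      also have "\<dots> \<le> (\<Sum>l\<in>?Sp. e')" by (rule sum_mono) (use a t in \<open>auto simp: abs_term_def\<close>)
      also have "\<dots> = real (card ?Sp) * e'" by simp
      also have "\<dots> \<le> \<epsilon>" unfolding e'_def using e by (simp add: field_simps)
      finally show "abs_sum D t \<le> \<epsilon>" .
    qed
  qed
qed

section \<open>The transformed equation\<close>

lemma ddelta_pow_eq_zero: "D l = 0 \<Longrightarrow> (ddelta ^^ i) D l = 0"
  by (induction i) (auto simp: ddelta_def)

lemma ddelta_pow_add: "(ddelta ^^ i) (\<lambda>l. D l + E l) = (\<lambda>l. (ddelta ^^ i) D l + (ddelta ^^ i) E l)"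
  by (induction i) (auto simp: ddelta_def smult_add_right pderiv_add)

lemma exps_ge_ddelta_pow: "exps_ge c D \<Longrightarrow> exps_ge c ((ddelta ^^ i) D)"
  unfolding exps_ge_def using ddelta_pow_eq_zero[of D _ i] by blast

lemma dulac_ddelta_pow: "dulac D \<Longrightarrow> dulac ((ddelta ^^ i) D)"
  unfolding dulac_def
  by (rule allI, rule finite_subset[rotated], erule spec) (auto dest: ddelta_pow_eq_zero[where i=i])

lemma finite_support_ddelta_pow: "finite {l. D l \<noteq> 0} \<Longrightarrow> finite {l. (ddelta ^^ i) D l \<noteq> 0}"
  by (rule finite_subset[rotated]) (auto dest: ddelta_pow_eq_zero[where i=i])

lemma finite_Re_lam_le:
  assumes "filterlim (\<lambda>k. Re (lam k)) at_top sequentially"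
  shows "finite {k. Re (lam k) \<le> R}"
proof -
  obtain N where "\<And>k. k \<ge> N \<Longrightarrow> R + 1 \<le> Re (lam k)"
    using assms[unfolded filterlim_at_top] eventually_sequentially by meson
  then have "{k. Re (lam k) \<le> R} \<subseteq> {..<N}" by (force simp: not_less[symmetric])
  then show ?thesis using finite_subset by blast
qed

definition dphi_tail :: "(nat \<Rightarrow> complex poly) \<Rightarrow> (nat \<Rightarrow> complex) \<Rightarrow> nat \<Rightarrow> dulac" where
  "dphi_tail c lam m = (\<lambda>s. \<Sum>k | m < k \<and> lam k = s. c k)"

lemma dphi_eq_dphim_plus_tail:
  assumes "filterlim (\<lambda>k. Re (lam k)) at_top sequentially"
  shows "dphi c lam = (\<lambda>s. dphim c lam m s + dphi_tail c lam m s)"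
proof
  fix s
  have fin: "finite {k. 1 \<le> k \<and> lam k = s}"
    by (rule finite_subset[OF _ finite_Re_lam_le[OF assms, of "Re s"]]) auto
  have "{k. 1 \<le> k \<and> lam k = s}
      = {k. 1 \<le> k \<and> k \<le> m \<and> lam k = s} \<union> {k. 1 \<le> k \<and> m < k \<and> lam k = s}" by auto
  then have "dphi c lam s = (\<Sum>k | 1 \<le> k \<and> k \<le> m \<and> lam k = s. c k) +
    (\<Sum>k | 1 \<le> k \<and> m < k \<and> lam k = s. c k)"
    unfolding dphi_def by (simp only:) (rule sum.union_disjoint, use fin in auto)
  moreover have "{k. 1 \<le> k \<and> m < k \<and> lam k = s} = {k. m < k \<and> lam k = s}" by auto
  ultimately show "dphi c lam s = dphim c lam m s + dphi_tail c lam m s"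
    unfolding dphim_def dphi_tail_def by simp
qed

lemma dphi_neq_zeroE:
  assumes "dphi c lam s \<noteq> 0" obtains k where "1 \<le> k" "lam k = s"
  using assms unfolding dphi_def by (auto elim: sum.not_neutral_contains_not_neutral)

lemma dphim_neq_zeroE:
  assumes "dphim c lam m s \<noteq> 0" obtains k where "1 \<le> k" "k \<le> m" "lam k = s"
  using assms unfolding dphim_def by (auto elim: sum.not_neutral_contains_not_neutral)

lemma dphi_tail_neq_zeroE:
  assumes "dphi_tail c lam m s \<noteq> 0" obtains k where "m < k" "lam k = s"
  using assms unfolding dphi_tail_def by (auto elim: sum.not_neutral_contains_not_neutral)

lemma finite_support_dphim: "finite {s. dphim c lam m s \<noteq> 0}"
  by (rule finite_subset[of _ "lam ` {1..m}"]) (auto elim!: dphim_neq_zeroE)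

lemma dulac_if_support_in_range:
  assumes "filterlim (\<lambda>k. Re (lam k)) at_top sequentially"
    and "\<And>s. D s \<noteq> 0 \<Longrightarrow> s \<in> range lam"
  shows "dulac D"
  unfolding dulac_def
proof
  fix R
  have "{l. D l \<noteq> 0 \<and> Re l < R} \<subseteq> lam ` {k. Re (lam k) \<le> R}"
    using assms(2) by fastforce
  then show "finite {l. D l \<noteq> 0 \<and> Re l < R}"
    using finite_Re_lam_le[OF assms(1)] finite_subset by blast
qed

lemma unitv_MI: "j \<le> n \<Longrightarrow> unitv j \<in> MI (Suc n)"
  unfolding MI_def unitv_def by auto

lemma msize_unitv: "j < k \<Longrightarrow> msize k (unitv j) = 1"
  unfolding msize_def unitv_def by simp

lemma unitv_inject: "unitv i = unitv j \<longleftrightarrow> i = j"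
  unfolding unitv_def by (metis zero_neq_one)

lemma msize_eq_1_iff:
  assumes q: "q \<in> MI k"
  shows "msize k q = 1 \<longleftrightarrow> (\<exists>j<k. q = unitv j)"
proof
  assume s: "msize k q = 1"
  then have "sum q {..<k} \<noteq> 0" unfolding msize_def by simp
  then obtain j where j: "j < k" "q j \<noteq> 0"
    by (auto elim: sum.not_neutral_contains_not_neutral)
  have "q i = 0" if "i \<noteq> j" for i
  proof (cases "i < k")
    case True
    have "q i + q j = (\<Sum>x\<in>{i, j}. q x)" using that by simp
    also have "\<dots> \<le> (\<Sum>x<k. q x)" by (rule sum_mono2) (use True j in auto)
    finally show ?thesis using s j unfolding msize_def by simp
  next
    case False then show ?thesis using q unfolding MI_def by auto
  qed
  moreover have "q j \<le> 1" using member_le_sum[of j "{..<k}" q] j s unfolding msize_def by simp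
  ultimately have "q = unitv j" using j unfolding unitv_def by fastforce
  then show "\<exists>j<k. q = unitv j" using j by blast
qed (auto simp: msize_unitv)

lemma msize_eq_0_iff: "q \<in> MI k \<Longrightarrow> msize k q = 0 \<longleftrightarrow> q = (\<lambda>_. 0)"
  unfolding msize_def MI_def by (auto simp: fun_eq_iff not_less[symmetric])

lemma taylorc_zero: "taylorc k f (\<lambda>_. 0) = f"
proof
  fix \<alpha> :: "nat \<Rightarrow> nat"
  have "(\<lambda>i. if i = 0 then \<alpha> 0 else \<alpha> i + 0) = \<alpha>" by (rule ext) simp
  then show "taylorc k f (\<lambda>_. 0) \<alpha> = f \<alpha>" unfolding taylorc_def by simp
qed

lemma taylorc_unitv:
  assumes "j < k"
  shows "taylorc k f (unitv j) = pdy f j"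
proof
  fix \<alpha> :: "nat \<Rightarrow> nat"
  have "(\<Prod>i<k. (\<alpha> (Suc i) + unitv j i) choose (unitv j i)) =
    (\<Prod>i<k. if i = j then \<alpha> (Suc j) + 1 else 1)"
    by (rule prod.cong) (auto simp: unitv_def)
  also have "\<dots> = \<alpha> (Suc j) + 1" using assms by (simp add: prod.delta)
  finally have "(\<Prod>i<k. (\<alpha> (Suc i) + unitv j i) choose (unitv j i)) = \<alpha> (Suc j) + 1" .
  moreover have "(\<lambda>i. if i = 0 then \<alpha> 0 else \<alpha> i + unitv j (i - 1)) = \<alpha>(Suc j := \<alpha> (Suc j) + 1)"
    by (rule ext) (auto simp: unitv_def split: nat.split)
  ultimately show "taylorc k f (unitv j) \<alpha> = pdy f j \<alpha>"
    unfolding taylorc_def pdy_def by simp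
qed

lemma ell_props:
  assumes "\<exists>j\<le>n. A j \<noteq> 0"
  shows "ell n A \<le> n" "A (ell n A) \<noteq> 0" "\<And>j. ell n A < j \<Longrightarrow> j \<le> n \<Longrightarrow> A j = 0"
proof -
  let ?E = "{j. j \<le> n \<and> A j \<noteq> 0}"
  have fin: "finite ?E" and ne: "?E \<noteq> {}" using assms by auto
  have "ell n A \<in> ?E" unfolding ell_def by (rule Max_in[OF fin ne])
  then show "ell n A \<le> n" "A (ell n A) \<noteq> 0" by auto
  show "A j = 0" if "ell n A < j" "j \<le> n" for j
    using Max_ge[OF fin, of j] that unfolding ell_def
      by (metis (mono_tags, lifting) mem_Collect_eq not_le)
qed

lemma tau_nonneg:
  assumes "\<forall>j\<le>n. Re nu < Re (nuj j)"
  shows "0 \<le> tau n A nu nuj"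
proof (cases "ell n A = n")
  case False
  let ?T = "{(Re (nuj j) - Re nu) / real (j - ell n A) | j. ell n A < j \<and> j \<le> n}"
  have "finite ?T" by simp
  moreover have "\<forall>x\<in>?T. 0 \<le> x" using assms by auto
  ultimately have "0 \<le> Min ?T" if "?T \<noteq> {}" using that by simp
  then show ?thesis unfolding tau_def using False by (cases "?T = {}") auto
qed (simp add: tau_def)

lemma poly_sum_neq_zero_large:
  fixes A :: "nat \<Rightarrow> complex"
  assumes "A l \<noteq> 0"
  obtains M where "\<And>z. M < norm z \<Longrightarrow> (\<Sum>j\<le>l. A j * z ^ j) \<noteq> 0"
proof -
  define p where "p = (\<Sum>j\<le>l. monom (A j) j)"
  have pz: "poly p z = (\<Sum>j\<le>l. A j * z ^ j)" for z unfolding p_def by (simp add: poly_sum poly_monom)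
  have "coeff p l = A l" unfolding p_def by (simp add: coeff_sum coeff_monom)
  then have "p \<noteq> 0" using assms by auto
  then have "bounded {z. poly p z = 0}" by (intro finite_imp_bounded poly_roots_finite)
  then obtain M where "\<forall>z\<in>{z. poly p z = 0}. norm z \<le> M" unfolding bounded_iff by blast
  then show ?thesis using that[of M] pz by force
qed

lemma dshift_dshift: "dshift a (dshift b D) = dshift (a + b) D"
  unfolding dshift_def by (simp add: algebra_simps)

locale dulac_formal_solution =
  fixes n :: nat and f :: "(nat \<Rightarrow> nat) \<Rightarrow> complex"
    and c :: "nat \<Rightarrow> complex poly" and lam :: "nat \<Rightarrow> complex" and r :: real
  assumes r_pos: "0 < r"
    and f_summable: "(\<lambda>\<alpha>. norm (f \<alpha>) * r ^ msize (Suc (Suc n)) \<alpha>) summable_on MI (Suc (Suc n))"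
    and Re_lam_1: "0 < Re (lam 1)"
    and Re_lam_mono: "\<forall>k\<ge>1. Re (lam k) \<le> Re (lam (Suc k))"
    and Re_lam_at_top: "filterlim (\<lambda>k. Re (lam k)) at_top sequentially"
    and solution: "dsubst (Suc n) f (\<lambda>j. (ddelta ^^ j) (dphi c lam)) = (\<lambda>_. 0)"
begin

abbreviation jet :: "nat \<Rightarrow> dulac" where
  "jet i \<equiv> (ddelta ^^ i) (dphi c lam)"

abbreviation jet_trunc :: "nat \<Rightarrow> nat \<Rightarrow> dulac" where
  "jet_trunc m i \<equiv> (ddelta ^^ i) (dphim c lam m)"

abbreviation coeff :: "nat \<Rightarrow> (nat \<Rightarrow> nat) \<Rightarrow> dulac" where
  "coeff m q \<equiv> dsubst (Suc n) (taylorc (Suc n) f q) (jet_trunc m)"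

lemma Re_lam_le:
  assumes "1 \<le> i" "i \<le> j"
  shows "Re (lam i) \<le> Re (lam j)"
  using assms(2)
proof (induction j rule: dec_induct)
  case (step j)
  then show ?case using Re_lam_mono assms(1) by (auto intro: order_trans)
qed simp

lemma substitutable_jet: "substitutable k (Re (lam 1)) jet"
proof -
  have "dulac (dphi c lam)"
    by (rule dulac_if_support_in_range[OF Re_lam_at_top]) (auto elim: dphi_neq_zeroE)
  moreover have "exps_ge (Re (lam 1)) (dphi c lam)"
    unfolding exps_ge_def by (auto elim!: dphi_neq_zeroE intro: Re_lam_le)
  ultimately show ?thesis
    unfolding substitutable_def using Re_lam_1 by (simp add: dulac_ddelta_pow exps_ge_ddelta_pow)
qed

lemma substitutable_jet_trunc: "substitutable k (Re (lam 1)) (jet_trunc m)"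
proof -
  have "dulac (dphim c lam m)"
    by (rule dulac_if_support_in_range[OF Re_lam_at_top]) (auto elim: dphim_neq_zeroE)
  moreover have "exps_ge (Re (lam 1)) (dphim c lam m)"
    unfolding exps_ge_def by (auto elim!: dphim_neq_zeroE intro: Re_lam_le)
  ultimately show ?thesis
    unfolding substitutable_def using Re_lam_1 by (simp add: dulac_ddelta_pow exps_ge_ddelta_pow)
qed

lemma exps_ge_jet_minus_jet_trunc: "exps_ge (Re (lam (Suc m))) (\<lambda>l. jet i l - jet_trunc m i l)"
proof -
  have "exps_ge (Re (lam (Suc m))) (dphi_tail c lam m)"
    unfolding exps_ge_def by (auto elim!: dphi_tail_neq_zeroE intro: Re_lam_le)
  then show ?thesis
    by (simp add: dphi_eq_dphim_plus_tail[OF Re_lam_at_top, of c m] ddelta_pow_add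
        exps_ge_ddelta_pow)
qed

lemma Re_lam_Suc_pos: "0 < Re (lam (Suc m))"
  using Re_lam_1 Re_lam_le[of 1 "Suc m"] by simp

lemma dsubst_jet_trunc_eq_below:
  "Re s < Re (lam (Suc m)) \<Longrightarrow> dsubst k g (jet_trunc m) s = dsubst k g jet s"
  by (rule dsubst_eq_below[OF less_imp_le[OF Re_lam_Suc_pos] substitutable_jet
      substitutable_jet_trunc exps_ge_jet_minus_jet_trunc, symmetric])

lemma exps_ge_dsubst_jet_trunc:
  assumes V: "0 \<le> V" "V \<le> Re (lam (Suc m))"
    and deriv: "\<And>j. j \<le> n \<Longrightarrow> exps_ge V (dsubst (Suc n) (pdy f j) jet)"
  shows "exps_ge (Re (lam (Suc m)) + V) (dsubst (Suc n) f (jet_trunc m))"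
proof (rule exps_ge_dsubst_near_root[OF less_imp_le[OF Re_lam_Suc_pos] V(1) substitutable_jet
      substitutable_jet_trunc exps_ge_jet_minus_jet_trunc solution])
  fix j assume "j < Suc n"
  then have "exps_ge V (dsubst (Suc n) (pdy f j) jet)" using deriv by simp
  then show "exps_ge V (dsubst (Suc n) (pdy f j) (jet_trunc m))"
    using V(2) dsubst_jet_trunc_eq_below[of _ m] unfolding exps_ge_def
    by (smt (verit))
qed (use V in auto)

lemma exists_gap_index: "\<exists>m\<ge>1. B < Re (lam m) \<and> Re (lam m) < Re (lam (Suc m))"
proof -
  obtain N where N: "1 \<le> N" "B < Re (lam N)"
  proof -
    obtain N0 where N0: "\<And>k. k \<ge> N0 \<Longrightarrow> B + 1 \<le> Re (lam k)"
      using Re_lam_at_top[unfolded filterlim_at_top] eventually_sequentially by meson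
    show ?thesis using that[of "max N0 1"] N0[of "max N0 1"] by simp
  qed
  define T where "T = {k. Re (lam k) \<le> Re (lam N)}"
  have fT: "finite T" unfolding T_def by (rule finite_Re_lam_le[OF Re_lam_at_top])
  have NT: "N \<in> T" unfolding T_def by simp
  define m where "m = Max T"
  have mN: "N \<le> m" unfolding m_def by (rule Max_ge[OF fT NT])
  have "m \<in> T" unfolding m_def using fT NT by (intro Max_in) auto
  then have "Re (lam m) = Re (lam N)" using Re_lam_le[OF N(1) mN] unfolding T_def by simp
  moreover have "Suc m \<notin> T" using Max_ge[OF fT, of "Suc m"] unfolding m_def by auto
  ultimately show ?thesis using N mN unfolding T_def by (intro exI[of _ m]) auto
qed

definition f_bound :: real where
  "f_bound = (\<Sum>\<^sub>\<infinity>\<beta>\<in>MI (Suc (Suc n)). norm (f \<beta>) * r ^ msize (Suc (Suc n)) \<beta>)"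

lemma f_bound_nonneg: "0 \<le> f_bound"
  unfolding f_bound_def by (rule infsum_nonneg) (use r_pos in simp)

lemma abs_sum_coeff_le:
  assumes q: "q \<in> MI (Suc n)"
    and jet: "\<And>j. j \<le> n \<Longrightarrow> abs_sum (jet_trunc m j) t \<le> r / 2" and et: "norm (exp t) \<le> r / 2"
  shows "abs_summable_at (coeff m q) t"
    "abs_sum (coeff m q) t \<le> (2 / r) ^ msize (Suc n) q * f_bound"
proof -
  have r2: "0 \<le> r / 2" "2 * (r / 2) \<le> r" using r_pos by auto
  have fin: "\<And>j. finite {l. jet_trunc m j l \<noteq> 0}"
    by (rule finite_support_ddelta_pow[OF finite_support_dphim])
  have summ: "abs_summable_at (jet_trunc m j) t" for j
    by (rule abs_summable_at_finite_support(1)[OF fin])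
  have jet': "\<And>j. j < Suc n \<Longrightarrow> abs_sum (jet_trunc m j) t \<le> r / 2" using jet by simp
  note taylorc = taylorc_summable[OF f_summable r_pos r2 q]
  show "abs_summable_at (coeff m q) t"
    by (rule abs_summable_at_dsubst(1)[OF substitutable_jet_trunc summ jet' et taylorc(1)])
  have "abs_sum (coeff m q) t
      \<le> (\<Sum>\<^sub>\<infinity>\<alpha>\<in>MI (Suc (Suc n)). norm (taylorc (Suc n) f q \<alpha>) * (r / 2) ^ msize (Suc (Suc n)) \<alpha>)"
    by (rule abs_summable_at_dsubst(2)[OF substitutable_jet_trunc summ jet' et taylorc(1)])
  also have "\<dots> \<le> (2 / r) ^ msize (Suc n) q * f_bound"
    unfolding f_bound_def by (rule taylorc(2))
  finally show "abs_sum (coeff m q) t \<le> (2 / r) ^ msize (Suc n) q * f_bound" .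
qed

definition coeff_sector :: "nat \<Rightarrow> complex set \<Rightarrow> bool" where
  "coeff_sector m S \<longleftrightarrow> is_sector S \<and> (\<forall>t\<in>S. Re t \<le> 0 \<and> \<bar>Im t\<bar> \<le> 1) \<and>
     (\<forall>q\<in>MI (Suc n). \<forall>t\<in>S. abs_summable_at (coeff m q) t \<and>
        abs_sum (coeff m q) t \<le> (2 / r) ^ msize (Suc n) q * f_bound)"

lemma eventually_jet_trunc_small:
  "eventually (\<lambda>U. (\<forall>j\<in>{..n}. \<forall>t. Re t \<le> - U \<and> \<bar>Im t\<bar> \<le> 1
       \<longrightarrow> abs_sum (jet_trunc m j) t \<le> r / 2) \<and> exp (- U) \<le> r / 2 \<and> 0 \<le> U) at_top"
proof (intro eventually_conj eventually_ball_finite ballI)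
  fix j
  show "eventually (\<lambda>U. \<forall>t. Re t \<le> - U \<and> \<bar>Im t\<bar> \<le> 1 \<longrightarrow> abs_sum (jet_trunc m j) t \<le> r / 2) at_top"
  proof (rule eventually_abs_sum_le_on_strip[OF finite_support_ddelta_pow[OF finite_support_dphim]
        _ Re_lam_1])
    fix l assume "jet_trunc m j l \<noteq> 0"
    then show "Re (lam 1) \<le> Re l"
      using substitutableD(3)[OF substitutable_jet_trunc, of j "Suc j" m] unfolding exps_ge_def
        by blast
  qed (use r_pos in simp)
  show "eventually (\<lambda>U. exp (- U) \<le> r / 2) at_top"
    unfolding eventually_at_top_linorder
  proof (intro exI allI impI)
    fix U :: real assume "- ln (r / 2) \<le> U"
    then have "exp (- U) \<le> exp (ln (r / 2))" by simp
    then show "exp (- U) \<le> r / 2" using r_pos by simp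
  qed
qed (auto intro: eventually_ge_at_top)

lemma exists_coeff_sector: "\<exists>S. coeff_sector m S"
proof -
  obtain U where U: "\<forall>j\<in>{..n}. \<forall>t. Re t \<le> - U \<and> \<bar>Im t\<bar> \<le> 1 \<longrightarrow> abs_sum (jet_trunc m j) t \<le> r / 2"
    "exp (- U) \<le> r / 2" "0 \<le> U"
    using eventually_happens'[OF trivial_limit_at_top_linorder eventually_jet_trunc_small] by blast
  define S where "S = {t. Re t < ln (exp (- U)) \<and> \<bar>Im t - 0\<bar> < 1 / 2}"
  have t: "Re t \<le> - U" "Re t \<le> 0" "\<bar>Im t\<bar> \<le> 1" "norm (exp t) \<le> r / 2" if "t \<in> S" for t
  proof -
    have "Re t < - U" "\<bar>Im t\<bar> < 1 / 2" using that unfolding S_def by auto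
    then show "Re t \<le> - U" "Re t \<le> 0" "\<bar>Im t\<bar> \<le> 1" using U(3) by auto
    have "norm (exp t) \<le> exp (- U)" using \<open>Re t < - U\<close> by simp
    then show "norm (exp t) \<le> r / 2" using U(2) by linarith
  qed
  have "coeff_sector m S"
    unfolding coeff_sector_def
  proof (intro conjI)
    show "is_sector S"
      unfolding is_sector_def S_def
      by (rule exI[of _ 0], rule exI[of _ 1], rule exI[of _ "exp (- U)"]) (use pi_gt3 in simp)
    show "\<forall>t\<in>S. Re t \<le> 0 \<and> \<bar>Im t\<bar> \<le> 1" using t by simp
    show "\<forall>q\<in>MI (Suc n). \<forall>t\<in>S. abs_summable_at (coeff m q) t \<and>
        abs_sum (coeff m q) t \<le> (2 / r) ^ msize (Suc n) q * f_bound"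
    proof (intro ballI)
      fix q t assume q: "q \<in> MI (Suc n)" and "t \<in> S"
      note t = t[OF this(2)]
      have "abs_sum (jet_trunc m j) t \<le> r / 2" if "j \<le> n" for j
        using U(1) t(1,3) that by simp
      then show "abs_summable_at (coeff m q) t \<and>
          abs_sum (coeff m q) t \<le> (2 / r) ^ msize (Suc n) q * f_bound"
        using abs_sum_coeff_le[OF q _ t(4)] by simp
    qed
  qed
  then show ?thesis ..
qed

end

locale dulac_linearization = dulac_formal_solution +
  fixes A :: "nat \<Rightarrow> complex" and B :: "nat \<Rightarrow> complex poly"
    and nu :: complex and nuj :: "nat \<Rightarrow> complex"
  assumes linear_terms: "\<forall>j\<le>n. B j \<noteq> 0 \<and> Re nu < Re (nuj j) \<and>
           dsubst (Suc n) (pdy f j) (\<lambda>i. (ddelta ^^ i) (dphi c lam)) nu = [:A j:] \<and>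
           dsubst (Suc n) (pdy f j) (\<lambda>i. (ddelta ^^ i) (dphi c lam)) (nuj j) = B j \<and>
           (\<forall>\<sigma>. \<sigma> \<noteq> nu \<and> dsubst (Suc n) (pdy f j) (\<lambda>i. (ddelta ^^ i) (dphi c lam)) \<sigma> \<noteq> 0
                 \<longrightarrow> Re (nuj j) \<le> Re \<sigma>)"
    and A_nonzero: "\<exists>j\<le>n. A j \<noteq> 0"
begin

abbreviation deriv_jet :: "nat \<Rightarrow> dulac" where
  "deriv_jet j \<equiv> dsubst (Suc n) (pdy f j) jet"

lemma linear_termsD:
  assumes "j \<le> n"
  shows "B j \<noteq> 0" "Re nu < Re (nuj j)" "deriv_jet j nu = [:A j:]" "deriv_jet j (nuj j) = B j"
    "\<sigma> \<noteq> nu \<Longrightarrow> deriv_jet j \<sigma> \<noteq> 0 \<Longrightarrow> Re (nuj j) \<le> Re \<sigma>"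
  using linear_terms assms by auto

lemma Re_nu_nonneg: "0 \<le> Re nu"
proof -
  obtain j where j: "j \<le> n" "A j \<noteq> 0" using A_nonzero by blast
  then have "deriv_jet j nu \<noteq> 0" using linear_termsD(3) by simp
  then show ?thesis
    using nonneg_dulac_dsubst[OF substitutable_jet] unfolding nonneg_dulac_def exps_ge_def by blast
qed

lemma exps_ge_deriv_jet: "j \<le> n \<Longrightarrow> exps_ge (Re nu) (deriv_jet j)"
  unfolding exps_ge_def using linear_termsD(2,5) by force

definition admissible :: "nat \<Rightarrow> bool" where
  "admissible m \<longleftrightarrow> 1 \<le> m \<and> Re (lam m) < Re (lam (Suc m)) \<and>
     2 * (Re nu + tau n A nu nuj) < Re (lam m) \<and> (\<forall>j\<le>n. Re (nuj j) < Re (lam m)) \<and>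
     (\<forall>w. Re (lam m) \<le> Re w \<longrightarrow> (\<Sum>j\<le>ell n A. A j * w ^ j) \<noteq> 0)"

lemma exists_admissible: "\<exists>m. admissible m"
proof -
  obtain M where M: "\<And>w. M < norm w \<Longrightarrow> (\<Sum>j\<le>ell n A. A j * w ^ j) \<noteq> 0"
    using poly_sum_neq_zero_large[where A=A and l="ell n A", OF ell_props(2)[OF A_nonzero]] by blast
  define B0 where "B0 = max M (max (2 * (Re nu + tau n A nu nuj)) (Max ((\<lambda>j. Re (nuj j)) ` {..n})))"
  obtain m where m: "1 \<le> m" "B0 < Re (lam m)" "Re (lam m) < Re (lam (Suc m))"
    using exists_gap_index by blast
  have "Re (nuj j) < Re (lam m)" if "j \<le> n" for j
    using m(2) Max_ge[of "(\<lambda>j. Re (nuj j)) ` {..n}" "Re (nuj j)"] that unfolding B0_def by auto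
  moreover have "(\<Sum>j\<le>ell n A. A j * w ^ j) \<noteq> 0" if "Re (lam m) \<le> Re w" for w
    using M[of w] m(2) complex_Re_le_cmod[of w] that unfolding B0_def by linarith
  ultimately show ?thesis using m unfolding admissible_def B0_def by auto
qed

lemma exps_ge_dsubst_f_jet_trunc:
  assumes "admissible m"
  shows "exps_ge (Re (lam (Suc m)) + Re nu) (dsubst (Suc n) f (jet_trunc m))"
proof (rule exps_ge_dsubst_jet_trunc[OF Re_nu_nonneg _ exps_ge_deriv_jet])
  show "Re nu \<le> Re (lam (Suc m))"
    using assms linear_termsD(2)[of 0] unfolding admissible_def by force
qed

definition lin_part :: "nat \<Rightarrow> nat \<Rightarrow> dulac" where
  "lin_part m j = (\<lambda>\<sigma>. dsubst (Suc n) (pdy f j) (jet_trunc m) (\<sigma> + nu)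
                       - (if \<sigma> = 0 \<and> j \<le> ell n A then [:A j:] else 0))"

lemma lin_part_eq_below:
  assumes "Re (\<sigma> + nu) < Re (lam (Suc m))"
  shows "lin_part m j \<sigma> = deriv_jet j (\<sigma> + nu) - (if \<sigma> = 0 \<and> j \<le> ell n A then [:A j:] else 0)"
  unfolding lin_part_def using dsubst_jet_trunc_eq_below[OF assms] by simp

lemma lin_part_at_nuj:
  assumes "admissible m" "j \<le> n"
  shows "lin_part m j (nuj j - nu) = B j"
proof -
  have "Re (nuj j) < Re (lam (Suc m))" using assms unfolding admissible_def by force
  then show ?thesis using lin_part_eq_below[of "nuj j - nu" m j] linear_termsD[OF assms(2)] by auto
qed

lemma exps_ge_lin_part:
  assumes "admissible m" "j \<le> n"
  shows "exps_ge (Re (nuj j) - Re nu) (lin_part m j)"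
  unfolding exps_ge_def
proof (intro allI impI)
  fix \<sigma> assume nz: "lin_part m j \<sigma> \<noteq> 0"
  show "Re (nuj j) - Re nu \<le> Re \<sigma>"
  proof (cases "Re (\<sigma> + nu) < Re (lam (Suc m))")
    case True
    note eq = lin_part_eq_below[OF True, of j]
    show ?thesis
    proof (cases "\<sigma> = 0")
      case True
      then have "lin_part m j \<sigma> = [:A j:] - (if j \<le> ell n A then [:A j:] else 0)"
        using eq linear_termsD(3)[OF assms(2)] by simp
      also have "\<dots> = 0" using ell_props(3)[OF A_nonzero, of j] assms(2) by auto
      finally show ?thesis using nz by simp
    next
      case False
      then show ?thesis using nz eq linear_termsD(5)[OF assms(2), of "\<sigma> + nu"] by auto
    qed
  next
    case False
    then show ?thesis using assms unfolding admissible_def by force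
  qed
qed

lemma in_Dcirc_lin_part:
  assumes m: "admissible m" and S: "coeff_sector m S" and j: "j \<le> n"
  shows "in_Dcirc S (lin_part m j)"
proof -
  let ?F = "dsubst (Suc n) (pdy f j) (jet_trunc m)" and ?p = "if j \<le> ell n A then [:A j:] else 0"
  have F: "?F = coeff m (unitv j)" using j by (simp add: taylorc_unitv)
  have lin: "lin_part m j = (\<lambda>\<sigma>. dshift (- nu) ?F \<sigma> - dmon 0 ?p \<sigma>)"
    unfolding lin_part_def dshift_def dmon_def by auto
  have "dulac (lin_part m j)"
    unfolding lin
    using nonneg_dulac_dsubst[OF substitutable_jet_trunc]
    by (intro dulac_diff dulac_dshift dulac_dmon) (simp add: nonneg_dulac_def)
  moreover have "0 < Re l" if "lin_part m j l \<noteq> 0" for l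
    using exps_ge_lin_part[OF m j] linear_termsD(2)[OF j] that unfolding exps_ge_def by force
  moreover have "(\<lambda>l. poly (lin_part m j l) t * exp (l * t)) summable_on UNIV" if "t \<in> S" for t
  proof -
    have "abs_summable_at (dshift (- nu) ?F) t"
      using S that unitv_MI[OF j] unfolding coeff_sector_def F
        by (blast intro: abs_summable_at_dshift)
    then have "(\<lambda>l. poly (dshift (- nu) ?F l) t * exp (l * t)
        + - (poly (dmon 0 ?p l) t * exp (l * t))) summable_on UNIV"
      by (intro summable_on_add summable_on_uminus[THEN iffD2] summable_on_of_abs_summable_at
          abs_summable_at_dmon)
    then show ?thesis unfolding lin by (simp add: left_diff_distrib)
  qed
  ultimately show ?thesis unfolding in_Dcirc_def by blast
qed

definition nonlin_shift :: "nat \<Rightarrow> (nat \<Rightarrow> nat) \<Rightarrow> complex" where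
  "nonlin_shift m q = lam m * of_nat (msize (Suc n) q) - (lam m + nu)
     - of_real (tau n A nu nuj) * of_nat (msize (Suc n) q)"

definition nonlin_coeff :: "nat \<Rightarrow> (nat \<Rightarrow> nat) \<Rightarrow> dulac" where
  "nonlin_coeff m q =
    (if msize (Suc n) q = 1 then (\<lambda>_. 0) else dshift (nonlin_shift m q) (coeff m q))"

lemma Re_nonlin_shift_pos:
  assumes "admissible m" "2 \<le> msize (Suc n) q"
  shows "0 < Re (nonlin_shift m q)"
proof -
  define Q where "Q = real (msize (Suc n) q)"
  have Q: "2 \<le> Q" using assms(2) unfolding Q_def by simp
  have L: "2 * (Re nu + tau n A nu nuj) < Re (lam m)" using assms(1) unfolding admissible_def
    by blast
  have "0 \<le> tau n A nu nuj" by (rule tau_nonneg) (use linear_termsD(2) in auto)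
  then have "0 \<le> (Q - 2) * (Re nu + tau n A nu nuj)" using Q Re_nu_nonneg by simp
  then have "Q * (Re nu + tau n A nu nuj) \<le> (Q - 1) * (2 * (Re nu + tau n A nu nuj))"
    by (simp add: algebra_simps)
  also have "\<dots> < (Q - 1) * Re (lam m)" using Q L by simp
  moreover have "Re nu \<le> Q * Re nu" using Q Re_nu_nonneg by (simp add: mult_le_cancel_right1)
  ultimately have "Re nu + tau n A nu nuj * Q < (Q - 1) * Re (lam m)"
    by (simp add: algebra_simps)
  then show ?thesis unfolding nonlin_shift_def Q_def by (simp add: algebra_simps)
qed

lemma in_Dcirc_nonlin_coeff:
  assumes m: "admissible m" and S: "coeff_sector m S" and q: "q \<in> MI (Suc n)"
  shows "in_Dcirc S (nonlin_coeff m q)"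
proof (cases "msize (Suc n) q = 1")
  case True
  then show ?thesis unfolding nonlin_coeff_def in_Dcirc_def dulac_def by simp
next
  case False
  then have a: "nonlin_coeff m q = dshift (nonlin_shift m q) (coeff m q)"
    unfolding nonlin_coeff_def by simp
  have nn: "nonneg_dulac (coeff m q)" by (rule nonneg_dulac_dsubst[OF substitutable_jet_trunc])
  have "0 < Re l" if "nonlin_coeff m q l \<noteq> 0" for l
  proof -
    have nz: "coeff m q (l - nonlin_shift m q) \<noteq> 0" using that unfolding a dshift_def .
    show ?thesis
    proof (cases "msize (Suc n) q = 0")
      case True
      then have "coeff m q = dsubst (Suc n) f (jet_trunc m)" "nonlin_shift m q = - (lam m + nu)"
        using q by (simp_all add: msize_eq_0_iff taylorc_zero nonlin_shift_def)
      then show ?thesis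
        using nz exps_ge_dsubst_f_jet_trunc[OF m] m unfolding exps_ge_def admissible_def by force
    next
      case False
      then have "2 \<le> msize (Suc n) q" using \<open>msize (Suc n) q \<noteq> 1\<close> by simp
      then show ?thesis
        using Re_nonlin_shift_pos[OF m] nz nn unfolding nonneg_dulac_def exps_ge_def by force
    qed
  qed
  moreover have "abs_summable_at (nonlin_coeff m q) t" if "t \<in> S" for t
    unfolding a using S that q unfolding coeff_sector_def by (blast intro: abs_summable_at_dshift)
  ultimately show ?thesis
    unfolding in_Dcirc_def a using dulac_dshift nn summable_on_of_abs_summable_at
    by (auto simp: nonneg_dulac_def)
qed

lemma norm_exp_nonlin_shift_le:
  assumes m: "admissible m" and Q: "msize (Suc n) q \<noteq> 1" and t: "Re t \<le> 0" "\<bar>Im t\<bar> \<le> 1"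
  shows "norm (exp (nonlin_shift m q * t))
    \<le> (norm (exp (- (lam m + nu) * t)) + exp (norm nu)) * exp (norm (lam m)) ^ msize (Suc n) q"
proof (cases "msize (Suc n) q = 0")
  case True
  then show ?thesis by (simp add: nonlin_shift_def)
next
  case False
  define Q where "Q = real (msize (Suc n) q)"
  have Q1: "1 \<le> Q" using False unfolding Q_def by simp
  have "2 \<le> msize (Suc n) q" using False Q by simp
  then have "0 \<le> Re (nonlin_shift m q)" using Re_nonlin_shift_pos[OF m] by (simp add: less_imp_le)
  then have re: "Re (nonlin_shift m q) * Re t \<le> 0" using t(1) by (rule mult_nonneg_nonpos)
  have "Im (nonlin_shift m q) = (Q - 1) * Im (lam m) - Im nu"
    unfolding nonlin_shift_def Q_def by (simp add: algebra_simps)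
  then have "\<bar>Im (nonlin_shift m q)\<bar> \<le> (Q - 1) * \<bar>Im (lam m)\<bar> + \<bar>Im nu\<bar>"
    using Q1 abs_triangle_ineq4[of "(Q - 1) * Im (lam m)" "Im nu"] by (simp add: abs_mult)
  also have "\<dots> \<le> Q * norm (lam m) + norm nu"
    using Q1 abs_Im_le_cmod[of "lam m"] abs_Im_le_cmod[of nu]
    by (intro add_mono order_trans[OF mult_left_mono mult_right_mono]) auto
  finally have "\<bar>Im (nonlin_shift m q)\<bar> \<le> Q * norm (lam m) + norm nu" .
  moreover have "- (Im (nonlin_shift m q) * Im t) \<le> \<bar>Im (nonlin_shift m q)\<bar>"
    using mult_left_mono[OF t(2), of "\<bar>Im (nonlin_shift m q)\<bar>"] by (simp add: abs_mult[symmetric])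
  ultimately have "Re (nonlin_shift m q * t) \<le> Q * norm (lam m) + norm nu"
    using re by simp
  then have "norm (exp (nonlin_shift m q * t)) \<le> exp (Q * norm (lam m) + norm nu)"
    by (simp add: norm_exp_eq_Re)
  also have "\<dots> = exp (norm nu) * exp (norm (lam m)) ^ msize (Suc n) q"
    unfolding Q_def exp_add exp_of_nat_mult by (rule mult.commute)
  also have "\<dots> \<le> (norm (exp (- (lam m + nu) * t)) + exp (norm nu))
      * exp (norm (lam m)) ^ msize (Suc n) q"
    by (intro mult_right_mono) auto
  finally show ?thesis .
qed

lemma norm_deval_nonlin_coeff_le:
  assumes m: "admissible m" and S: "coeff_sector m S" and q: "q \<in> MI (Suc n)" and t: "t \<in> S"
  shows "norm (deval (nonlin_coeff m q) t)
    \<le> (norm (exp (- (lam m + nu) * t)) + exp (norm nu)) * f_bound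
      * (exp (norm (lam m)) * (2 / r)) ^ msize (Suc n) q"
proof (cases "msize (Suc n) q = 1")
  case True
  then show ?thesis using f_bound_nonneg r_pos by (simp add: nonlin_coeff_def deval_def)
next
  case False
  let ?Q = "msize (Suc n) q"
  have coeff: "abs_summable_at (coeff m q) t" "abs_sum (coeff m q) t \<le> (2 / r) ^ ?Q * f_bound"
    using S t q unfolding coeff_sector_def by auto
  have a: "nonlin_coeff m q = dshift (nonlin_shift m q) (coeff m q)"
    using False unfolding nonlin_coeff_def by simp
  have "norm (deval (nonlin_coeff m q) t) \<le> abs_sum (nonlin_coeff m q) t"
    unfolding a by (rule norm_deval_le_abs_sum[OF abs_summable_at_dshift(1)[OF coeff(1)]])
  also have "\<dots> = norm (exp (nonlin_shift m q * t)) * abs_sum (coeff m q) t"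
    unfolding a by (rule abs_summable_at_dshift(2)[OF coeff(1)])
  also have "\<dots> \<le> (norm (exp (- (lam m + nu) * t)) + exp (norm nu)) * exp (norm (lam m)) ^ ?Q
      * ((2 / r) ^ ?Q * f_bound)"
    using norm_exp_nonlin_shift_le[OF m False] S t coeff(2) abs_sum_nonneg
    unfolding coeff_sector_def by (intro mult_mono) auto
  also have "\<dots> = (norm (exp (- (lam m + nu) * t)) + exp (norm nu)) * f_bound
      * (exp (norm (lam m)) * (2 / r)) ^ ?Q"
    by (simp only: power_mult_distrib ac_simps)
  finally show ?thesis .
qed

lemma nonlin_coeff_summable:
  assumes m: "admissible m" and S: "coeff_sector m S"
  shows "\<exists>\<rho>>0. \<forall>t\<in>S.
    (\<lambda>q. norm (deval (nonlin_coeff m q) t) * \<rho> ^ msize (Suc n) q) summable_on MI (Suc n)"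
proof (intro exI[of _ "r / (4 * exp (norm (lam m)))"] conjI ballI)
  define \<rho> where "\<rho> = r / (4 * exp (norm (lam m)))"
  show "0 < \<rho>" unfolding \<rho>_def using r_pos by simp
  fix t assume t: "t \<in> S"
  define K where "K = (norm (exp (- (lam m + nu) * t)) + exp (norm nu)) * f_bound"
  have bound:
    "norm (deval (nonlin_coeff m q) t) * \<rho> ^ msize (Suc n) q \<le> K * (1 / 2) ^ msize (Suc n) q"
    if q: "q \<in> MI (Suc n)" for q
  proof -
    have "norm (deval (nonlin_coeff m q) t) * \<rho> ^ msize (Suc n) q
        \<le> K * (exp (norm (lam m)) * (2 / r)) ^ msize (Suc n) q * \<rho> ^ msize (Suc n) q"
      using norm_deval_nonlin_coeff_le[OF m S q t] \<open>0 < \<rho>\<close> unfolding K_def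
      by (intro mult_right_mono) simp_all
    also have "\<dots> = K * (exp (norm (lam m)) * (2 / r) * \<rho>) ^ msize (Suc n) q"
      by (simp only: power_mult_distrib mult.assoc)
    also have "exp (norm (lam m)) * (2 / r) * \<rho> = 1 / 2"
      unfolding \<rho>_def using r_pos by simp
    finally show ?thesis .
  qed
  have "(\<lambda>q. K * (1 / 2 :: real) ^ msize (Suc n) q) summable_on MI (Suc n)"
    by (intro summable_on_cmult_right summable_on_power_msize) auto
  then show "(\<lambda>q. norm (deval (nonlin_coeff m q) t) * \<rho> ^ msize (Suc n) q) summable_on MI (Suc n)"
    by (rule summable_on_comparison_test[OF _ bound]) (use \<open>0 < \<rho>\<close> in auto)
qed

lemma transformed_equation:
  assumes q: "q \<in> MI (Suc n)"
  shows "dshift (lam m * of_nat (msize (Suc n) q) - (lam m + nu)) (coeff m q)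
    = dadd (\<lambda>\<sigma>. \<Sum>j\<le>n. if q = unitv j
                         then (if \<sigma> = 0 \<and> j \<le> ell n A then [:A j:] else 0) + lin_part m j \<sigma>
                         else 0)
           (dshift (of_real (tau n A nu nuj) * of_nat (msize (Suc n) q)) (nonlin_coeff m q))"
proof (cases "msize (Suc n) q = 1")
  case True
  then obtain j where "j < Suc n" "q = unitv j" using msize_eq_1_iff[OF q] by blast
  then have j: "j \<le> n" "q = unitv j" by simp_all
  have "(\<Sum>i\<le>n. if unitv j = unitv i
           then (if \<sigma> = 0 \<and> i \<le> ell n A then [:A i:] else 0) + lin_part m i \<sigma> else 0)
      = (if \<sigma> = 0 \<and> j \<le> ell n A then [:A j:] else 0) + lin_part m j \<sigma>" for \<sigma>
    using j(1) by (simp add: unitv_inject sum.delta)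
  then show ?thesis
    unfolding j(2) using j(1)
    by (intro ext)
      (simp add: dadd_def dshift_def lin_part_def nonlin_coeff_def msize_unitv taylorc_unitv)
next
  case False
  have "q \<noteq> unitv j" if "j \<le> n" for j using False that msize_unitv[of j "Suc n"] by auto
  then show ?thesis
    using False
    by (simp add: dadd_def nonlin_coeff_def nonlin_shift_def dshift_dshift algebra_simps)
qed

end

theorem lemma2:
  fixes n :: nat and f :: "(nat \<Rightarrow> nat) \<Rightarrow> complex"
    and c :: "nat \<Rightarrow> complex poly" and lam :: "nat \<Rightarrow> complex"
    and A :: "nat \<Rightarrow> complex" and B :: "nat \<Rightarrow> complex poly"
    and nu :: complex and nuj :: "nat \<Rightarrow> complex"
  assumes "n \<ge> 1"
    and "conv_ps (Suc (Suc n)) f"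
    and "\<exists>\<alpha>. f \<alpha> \<noteq> 0"
    and "f (\<lambda>_. 0) = 0"
    and "c 1 \<noteq> 0"
    and "0 < Re (lam 1)"
    and "\<forall>k\<ge>1. Re (lam k) \<le> Re (lam (Suc k))"
    and "filterlim (\<lambda>k. Re (lam k)) at_top sequentially"
    and "dsubst (Suc n) f (\<lambda>j. (ddelta ^^ j) (dphi c lam)) = (\<lambda>_. 0)"
    and "dsubst (Suc n) (pdy f n) (\<lambda>i. (ddelta ^^ i) (dphi c lam)) \<noteq> (\<lambda>_. 0)"
    and "\<forall>j\<le>n. B j \<noteq> 0 \<and> Re nu < Re (nuj j) \<and>
           dsubst (Suc n) (pdy f j) (\<lambda>i. (ddelta ^^ i) (dphi c lam)) nu = [:A j:] \<and>
           dsubst (Suc n) (pdy f j) (\<lambda>i. (ddelta ^^ i) (dphi c lam)) (nuj j) = B j \<and>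
           (\<forall>\<sigma>. \<sigma> \<noteq> nu \<and> dsubst (Suc n) (pdy f j) (\<lambda>i. (ddelta ^^ i) (dphi c lam)) \<sigma> \<noteq> 0
                 \<longrightarrow> Re (nuj j) \<le> Re \<sigma>)"
    and "\<exists>j\<le>n. A j \<noteq> 0"
  shows "\<exists>m\<ge>1. \<exists>S Lt a. is_sector S \<and>
     (\<forall>z. 0 \<le> Re z \<longrightarrow> (\<Sum>j\<le>ell n A. A j * (lam m + z) ^ j) \<noteq> 0) \<and>
     (\<forall>j\<le>n. in_Dcirc S (Lt j) \<and> Lt j (nuj j - nu) = B j \<and>
              (\<forall>\<sigma>. Lt j \<sigma> \<noteq> 0 \<longrightarrow> Re (nuj j) - Re nu \<le> Re \<sigma>)) \<and>
     (\<forall>q\<in>MI (Suc n). in_Dcirc S (a q)) \<and>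
     (\<forall>q\<in>MI (Suc n). msize (Suc n) q = 1 \<longrightarrow> a q = (\<lambda>_. 0)) \<and>
     (\<exists>\<rho>>0. \<forall>t\<in>S. (\<lambda>q. norm (deval (a q) t) * \<rho> ^ msize (Suc n) q) summable_on MI (Suc n)) \<and>
     (\<forall>q\<in>MI (Suc n).
        dshift (lam m * of_nat (msize (Suc n) q) - (lam m + nu))
          (dsubst (Suc n) (taylorc (Suc n) f q) (\<lambda>i. (ddelta ^^ i) (dphim c lam m)))
        = dadd (\<lambda>\<sigma>. \<Sum>j\<le>n. if q = unitv j
                            then (if \<sigma> = 0 \<and> j \<le> ell n A then [:A j:] else 0) + Lt j \<sigma>
                            else 0)
               (dshift (of_real (tau n A nu nuj) * of_nat (msize (Suc n) q)) (a q)))"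
proof -
  \<comment> \<open>The hypotheses n \<ge> 1, f \<noteq> 0, f 0 = 0, c 1 \<noteq> 0 and the one on pdy f n belong to the setting
    of the paper; the transformation itself does not need them.\<close>
  obtain r where r: "0 < r"
    "(\<lambda>\<alpha>. norm (f \<alpha>) * r ^ msize (Suc (Suc n)) \<alpha>) summable_on MI (Suc (Suc n))"
    using assms(2) unfolding conv_ps_def by blast
  interpret dulac_linearization n f c lam r A B nu nuj
    by unfold_locales (use r assms(6-9,11,12) in auto)
  obtain m where m: "admissible m" using exists_admissible by blast
  obtain S where S: "coeff_sector m S" using exists_coeff_sector by blast
  have "\<forall>z. 0 \<le> Re z \<longrightarrow> (\<Sum>j\<le>ell n A. A j * (lam m + z) ^ j) \<noteq> 0"
    using m unfolding admissible_def by simp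
  moreover have "1 \<le> m" "is_sector S" using m S unfolding admissible_def coeff_sector_def by auto
  ultimately show ?thesis
    using lin_part_at_nuj[OF m] exps_ge_lin_part[OF m] in_Dcirc_lin_part[OF m S]
      in_Dcirc_nonlin_coeff[OF m S] nonlin_coeff_summable[OF m S] transformed_equation
    by (intro exI[of _ m] conjI exI[of _ S] exI[of _ "lin_part m"] exI[of _ "nonlin_coeff m"])
       (auto simp: exps_ge_def nonlin_coeff_def)
qed

end
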